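(* Let $\lambda\ne0$, $J\in\mathbb{R}$, $\sigma>0$. Let $X$ solve \[ dX_t=(-X_t+G)\,dt+\lambda\,dB_t, \] where $B$ is a Brownian motion, $G\sim\mathcal{N}(J,\sigma^2)$, and $X_0,G,B$ are independent; and let $Y$ solve \[ dY_t=\Big(-Y_t+J+\lambda\sigma^2\int_0^t\frac{dW_s}{\lambda^2+\sigma^2s}\Big)dt+\lambda\,dW_t, \] where $W$ is a Brownian motion independent of $Y_0$. Assume $X_0$ and $Y_0$ have the same Gaussian distribution. Then $X$ and $Y$ are Gaussian processes with identical means and covariance functions. *)

theory Defs
  imports "HOL-Probability.Probability"
begin

definition real_gaussian :: "'a measure \<Rightarrow> ('a \<Rightarrow> real) \<Rightarrow> bool" where
  "real_gaussian M Z \<longleftrightarrow> Z \<in> borel_measurable M \<and>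
     ((\<exists>c. distr M lborel Z = return lborel c) \<or>
      (\<exists>mu s. s > 0 \<and> distributed M lborel Z (normal_density mu s)))"

text \<open>Gaussian process on time set T: all finite linear combinations are Gaussian
  (equivalently, all finite-dimensional distributions are jointly Gaussian).\<close>
definition gaussian_process :: "'a measure \<Rightarrow> (real \<Rightarrow> 'a \<Rightarrow> real) \<Rightarrow> real set \<Rightarrow> bool" where
  "gaussian_process M X T \<longleftrightarrow>
     (\<forall>F c. finite F \<and> F \<subseteq> T \<longrightarrow> real_gaussian M (\<lambda>\<omega>. \<Sum>t\<in>F. c t * X t \<omega>))"

definition brownian_motion :: "'a measure \<Rightarrow> (real \<Rightarrow> 'a \<Rightarrow> real) \<Rightarrow> bool" where
  "brownian_motion M B \<longleftrightarrow> prob_space M \<and>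
     (\<forall>t. B t \<in> borel_measurable M) \<and>
     (AE \<omega> in M. B 0 \<omega> = 0) \<and>
     (AE \<omega> in M. continuous_on {0..} (\<lambda>t. B t \<omega>)) \<and>
     (\<forall>s t. 0 \<le> s \<and> s < t \<longrightarrow>
        distributed M lborel (\<lambda>\<omega>. B t \<omega> - B s \<omega>) (normal_density 0 (sqrt (t - s)))) \<and>
     (\<forall>(n::nat) (ts::nat \<Rightarrow> real). 0 \<le> ts 0 \<and> (\<forall>i<n. ts i < ts (Suc i)) \<longrightarrow>
        prob_space.indep_vars M (\<lambda>_. borel) (\<lambda>i \<omega>. B (ts (Suc i)) \<omega> - B (ts i) \<omega>) {..<n})"

text \<open>Wiener integral \<open>\<integral>_0^t f(s) dW_s\<close> of a deterministic C^1 integrand f,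
  defined pathwise by integration by parts.\<close>
definition wiener_integral :: "(real \<Rightarrow> real) \<Rightarrow> (real \<Rightarrow> 'a \<Rightarrow> real) \<Rightarrow> real \<Rightarrow> 'a \<Rightarrow> real" where
  "wiener_integral f W t \<omega> =
     f t * W t \<omega> - f 0 * W 0 \<omega> - integral {0..t} (\<lambda>s. deriv f s * W s \<omega>)"

definition path :: "(real \<Rightarrow> 'a \<Rightarrow> real) \<Rightarrow> 'a \<Rightarrow> real \<Rightarrow> real" where
  "path B \<omega> = restrict (\<lambda>t. B t \<omega>) {0..}"

definition indep3_rv :: "'a measure \<Rightarrow> 'b measure \<Rightarrow> ('a \<Rightarrow> 'b) \<Rightarrow> 'c measure \<Rightarrow> ('a \<Rightarrow> 'c)
    \<Rightarrow> 'd measure \<Rightarrow> ('a \<Rightarrow> 'd) \<Rightarrow> bool" where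
  "indep3_rv M M1 Z1 M2 Z2 M3 Z3 \<longleftrightarrow>
     prob_space.indep_sets M (\<lambda>i::nat. if i = 0 then sets (vimage_algebra (space M) Z1 M1)
        else if i = 1 then sets (vimage_algebra (space M) Z2 M2)
        else sets (vimage_algebra (space M) Z3 M3)) {0, 1, 2}"

definition indep2_rv :: "'a measure \<Rightarrow> 'b measure \<Rightarrow> ('a \<Rightarrow> 'b) \<Rightarrow> 'c measure \<Rightarrow> ('a \<Rightarrow> 'c) \<Rightarrow> bool" where
  "indep2_rv M M1 Z1 M2 Z2 \<longleftrightarrow>
     prob_space.indep_set M (sets (vimage_algebra (space M) Z1 M1)) (sets (vimage_algebra (space M) Z2 M2))"

end

(*
  Both equations are linear and are solved path by path by variation of constants.  With the
  Wiener integrals written as lam * B t + \<integral>\<^sub>0\<^sup>t q(t, w) B w dw, this gives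
    X t = exp (-t) X 0 + (1 - exp (-t)) G + \<integral>\<^sub>0\<^sup>t lam exp (w - t) dB w,
    Y t = exp (-t) Y 0 + (1 - exp (-t)) J + \<integral>\<^sub>0\<^sup>t K(t, w) dW w,
  where K(t, w) = lam exp (w - t) + lam sigma^2 (1 - exp (w - t)) / (lam^2 + sigma^2 w).
  Approximating the Wiener integrals by sums of independent Brownian increments along partitions
  of vanishing mesh shows that each finite linear combination of the X t (resp. Y t) has a
  Gaussian characteristic function, with variance given by the Ito isometry.  The variances for
  X and Y agree because, over [0, min s t], the integral of K(s, w) K(t, w) exceeds that of
  lam^2 exp (2w - s - t) by exactly sigma^2 (1 - exp (-s)) (1 - exp (-t)), the contribution of G
  to the covariance of X; this follows by differentiating
  lam^2 sigma^2 (1 - exp (w - s)) (1 - exp (w - t)) / (lam^2 + sigma^2 w) in w.  Equal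
  characteristic functions of all linear combinations give equal means and covariances.
*)

theory Submission
  imports Defs
begin

section \<open>Gaussian characteristic functions\<close>

text \<open>Mean m and variance v; v = 0 gives the point mass at m.\<close>

definition gauss_char :: "real \<Rightarrow> real \<Rightarrow> real \<Rightarrow> complex" where
  "gauss_char m v u = iexp (u * m) * complex_of_real (exp (- (v * u\<^sup>2) / 2))"

lemma gauss_char_scale: "gauss_char m v (u * a) = gauss_char (a * m) (a\<^sup>2 * v) u"
  by (simp add: gauss_char_def power_mult_distrib mult_ac)

lemma gauss_char_mult: "gauss_char m1 v1 u * gauss_char m2 v2 u = gauss_char (m1 + m2) (v1 + v2) u"
proof -
  have "iexp (u * m1) * iexp (u * m2) = iexp (u * (m1 + m2))"
    by (simp add: exp_add[symmetric] distrib_left)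
  moreover have "exp (- (v1 * u\<^sup>2) / 2) * exp (- (v2 * u\<^sup>2) / 2) = exp (- ((v1 + v2) * u\<^sup>2) / 2)"
    by (simp add: exp_add[symmetric] field_simps)
  ultimately show ?thesis
    by (simp add: gauss_char_def mult_ac flip: of_real_mult)
qed

lemma distr_lborel_eq_borel: "distr M lborel Z = distr M borel Z"
  by (rule distr_cong) auto

lemma char_distr_eq_integral:
  "Z \<in> borel_measurable M \<Longrightarrow> char (distr M borel Z) u = (CLINT x|M. iexp (u * Z x))"
  by (simp add: char_def integral_distr)

lemma char_return: "char (return borel m) u = gauss_char m 0 u"
  unfolding char_def gauss_char_def by (subst integral_return) auto

lemma char_normal_density:
  assumes s: "s > 0"
  shows "char (density lborel (normal_density m s)) u = gauss_char m (s\<^sup>2) u"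
proof -
  interpret std: prob_space std_normal_distribution
    by (simp add: prob_space_normal_density)
  have "distributed std_normal_distribution lborel (\<lambda>x. m + s * x) (normal_density (m + s * 0) (\<bar>s\<bar> * 1))"
    by (rule std.normal_density_affine) (use s in \<open>auto simp: distributed_def distr_id2\<close>)
  then have eq: "density lborel (normal_density m s) = distr std_normal_distribution borel (\<lambda>x. m + s * x)"
    using s by (simp add: distributed_def distr_lborel_eq_borel)
  have "char (density lborel (normal_density m s)) u
      = (CLINT x|std_normal_distribution. iexp (u * m) * iexp ((u * s) * x))"
    unfolding eq by (subst char_distr_eq_integral) (auto simp: algebra_simps simp flip: exp_add)
  also have "\<dots> = iexp (u * m) * char std_normal_distribution (u * s)"
    unfolding char_def by simp
  finally show ?thesis
    by (simp add: char_std_normal_distribution gauss_char_def power_mult_distrib mult_ac)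
qed

lemma char_real_gaussian:
  assumes "real_gaussian M Z"
  obtains m v where "v \<ge> 0" "\<And>u. char (distr M borel Z) u = gauss_char m v u"
  using assms unfolding real_gaussian_def
proof (elim conjE disjE exE)
  fix c assume "distr M lborel Z = return lborel c"
  then have "distr M borel Z = return borel c"
    by (simp add: distr_lborel_eq_borel return_cong[of lborel borel])
  then show thesis
    using that[of 0 c] by (simp add: char_return)
next
  fix m s assume "s > 0" "distributed M lborel Z (normal_density m s)"
  then show thesis
    using that[of "s\<^sup>2" m] by (simp add: distributed_def distr_lborel_eq_borel char_normal_density)
qed

lemma distr_if_gauss_char:
  assumes "prob_space M" and Z: "Z \<in> borel_measurable M"
    and ch: "\<And>u. char (distr M borel Z) u = gauss_char m v u"
  shows "v = 0 \<and> distr M borel Z = return borel m \<or>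
         v > 0 \<and> distributed M lborel Z (normal_density m (sqrt v))"
proof -
  interpret prob_space M by fact
  have rd: "real_distribution (distr M borel Z)"
    using Z by (auto simp: real_distribution_def real_distribution_axioms_def intro!: prob_space_distr)
  have "norm (char (distr M borel Z) 1) \<le> 1"
    by (rule real_distribution.cmod_char_le_1[OF rd])
  then have "exp (- v / 2) \<le> 1"
    by (simp add: ch gauss_char_def norm_mult)
  then consider "v = 0" | "v > 0"
    by fastforce
  then show ?thesis
  proof cases
    case 1
    have "distr M borel Z = return borel m"
      by (rule Levy_uniqueness[OF rd]) (auto simp: ch char_return 1 real_distribution_def
          real_distribution_axioms_def intro!: prob_space_return)
    with 1 show ?thesis by simp
  next
    case 2
    have "distr M borel Z = density lborel (normal_density m (sqrt v))"
      by (rule Levy_uniqueness[OF rd]) (use 2 in \<open>auto simp: ch char_normal_density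
          real_distribution_def real_distribution_axioms_def intro!: prob_space_normal_density\<close>)
    with 2 Z show ?thesis
      by (simp add: distributed_def distr_lborel_eq_borel)
  qed
qed

lemma real_gaussian_if_gauss_char:
  assumes "prob_space M" "Z \<in> borel_measurable M" "\<And>u. char (distr M borel Z) u = gauss_char m v u"
  shows "real_gaussian M Z"
  using distr_if_gauss_char[OF assms] assms(2)
  unfolding real_gaussian_def by (auto simp: distr_lborel_eq_borel return_cong[of lborel borel])

lemma moments_if_gauss_char:
  assumes M: "prob_space M" and Z: "Z \<in> borel_measurable M"
    and ch: "\<And>u. char (distr M borel Z) u = gauss_char m v u"
  shows "integrable M Z" "integrable M (\<lambda>x. (Z x)\<^sup>2)"
    "prob_space.expectation M Z = m" "prob_space.expectation M (\<lambda>x. (Z x)\<^sup>2) = v + m\<^sup>2"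
proof -
  interpret prob_space M by (rule M)
  have "(integrable M Z \<and> integrable M (\<lambda>x. (Z x)\<^sup>2)) \<and> expectation Z = m \<and> expectation (\<lambda>x. (Z x)\<^sup>2) = v + m\<^sup>2"
    using distr_if_gauss_char[OF M Z ch]
  proof (elim disjE conjE)
    assume v: "v = 0" and D: "distr M borel Z = return borel m"
    have "integrable M (\<lambda>x. g (Z x)) \<and> expectation (\<lambda>x. g (Z x)) = g m"
      if g: "g \<in> borel_measurable borel" for g :: "real \<Rightarrow> real"
    proof -
      note [measurable] = g
      interpret R: prob_space "return borel m"
        by (rule prob_space_return) simp
      have "integrable (return borel m) g"
        by (rule integrable_cong_AE_imp[where g="\<lambda>_. g m"]) (use g in \<open>auto simp: AE_return\<close>)
      then show ?thesis
        using integrable_distr_eq[OF Z g] integral_distr[OF Z g] g D by (simp add: integral_return)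
    qed
    from this[of "\<lambda>x. x"] this[of "\<lambda>x. x\<^sup>2"] v show ?thesis by simp
  next
    assume v: "v > 0" and D: "distributed M lborel Z (normal_density m (sqrt v))"
    have s: "sqrt v > 0" using v by simp
    have i1: "integrable M Z"
      using distributed_integrable[OF D, of "\<lambda>x. x"] integrable_normal_moment_nz_1 s by auto
    have "integrable lborel (\<lambda>x. normal_density m (sqrt v) x * (x - m)\<^sup>2
        + (2 * m * (normal_density m (sqrt v) x * x) - m\<^sup>2 * normal_density m (sqrt v) x))"
      by (intro Bochner_Integration.integrable_add Bochner_Integration.integrable_diff
          integrable_mult_right integrable_normal_moment integrable_normal_moment_nz_1
          integrable_normal_density s)
    then have "integrable lborel (\<lambda>x. normal_density m (sqrt v) x * x\<^sup>2)"
      by (simp add: power2_eq_square algebra_simps)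
    then have i2: "integrable M (\<lambda>x. (Z x)\<^sup>2)"
      using distributed_integrable[OF D, of "\<lambda>x. x\<^sup>2"] by auto
    have e1: "expectation Z = m"
      using normal_distributed_expectation[OF s D] by simp
    have "variance Z = v"
      using normal_distributed_variance[OF s D] v by simp
    with variance_eq[OF i1 i2] e1 i1 i2 show ?thesis by simp
  qed
  then show "integrable M Z" "integrable M (\<lambda>x. (Z x)\<^sup>2)"
    "expectation Z = m" "expectation (\<lambda>x. (Z x)\<^sup>2) = v + m\<^sup>2" by auto
qed

lemma integral_mult_polarization:
  fixes f g :: "'a \<Rightarrow> real"
  assumes "integrable M (\<lambda>x. (f x + g x)\<^sup>2)" "integrable M (\<lambda>x. (f x)\<^sup>2)" "integrable M (\<lambda>x. (g x)\<^sup>2)"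
  shows "(\<integral>x. f x * g x \<partial>M) = ((\<integral>x. (f x + g x)\<^sup>2 \<partial>M) - (\<integral>x. (f x)\<^sup>2 \<partial>M) - (\<integral>x. (g x)\<^sup>2 \<partial>M)) / 2"
proof -
  have "(\<integral>x. f x * g x \<partial>M) = (\<integral>x. ((f x + g x)\<^sup>2 - (f x)\<^sup>2 - (g x)\<^sup>2) / 2 \<partial>M)"
    by (intro Bochner_Integration.integral_cong refl) (simp add: power2_eq_square algebra_simps)
  also have "\<dots> = ((\<integral>x. (f x + g x)\<^sup>2 \<partial>M) - (\<integral>x. (f x)\<^sup>2 \<partial>M) - (\<integral>x. (g x)\<^sup>2 \<partial>M)) / 2"
    using assms by simp
  finally show ?thesis .
qed

lemma gaussian_processes_same_moments:
  assumes M: "prob_space M" and N: "prob_space N"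
    and X: "\<And>t. X t \<in> borel_measurable M" and Y: "\<And>t. Y t \<in> borel_measurable N"
    and ch: "\<And>F c. finite F \<Longrightarrow> F \<subseteq> T \<Longrightarrow> \<exists>m v.
        (\<forall>u. char (distr M borel (\<lambda>\<omega>. \<Sum>t\<in>F. c t * X t \<omega>)) u = gauss_char m v u) \<and>
        (\<forall>u. char (distr N borel (\<lambda>\<omega>. \<Sum>t\<in>F. c t * Y t \<omega>)) u = gauss_char m v u)"
  shows "gaussian_process M X T \<and> gaussian_process N Y T \<and>
    (\<forall>t\<in>T. prob_space.expectation M (X t) = prob_space.expectation N (Y t)) \<and>
    (\<forall>s\<in>T. \<forall>t\<in>T.
       prob_space.expectation M (\<lambda>\<omega>. X s \<omega> * X t \<omega>)
         - prob_space.expectation M (X s) * prob_space.expectation M (X t)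
     = prob_space.expectation N (\<lambda>\<omega>. Y s \<omega> * Y t \<omega>)
         - prob_space.expectation N (Y s) * prob_space.expectation N (Y t))"
proof -
  interpret M: prob_space M by (rule M)
  interpret N: prob_space N by (rule N)
  note [measurable] = X Y
  have lincomb: "real_gaussian M (\<lambda>\<omega>. \<Sum>t\<in>F. c t * X t \<omega>) \<and> real_gaussian N (\<lambda>\<omega>. \<Sum>t\<in>F. c t * Y t \<omega>)
      \<and> integrable M (\<lambda>\<omega>. (\<Sum>t\<in>F. c t * X t \<omega>)\<^sup>2) \<and> integrable N (\<lambda>\<omega>. (\<Sum>t\<in>F. c t * Y t \<omega>)\<^sup>2)
      \<and> M.expectation (\<lambda>\<omega>. \<Sum>t\<in>F. c t * X t \<omega>) = N.expectation (\<lambda>\<omega>. \<Sum>t\<in>F. c t * Y t \<omega>)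
      \<and> M.expectation (\<lambda>\<omega>. (\<Sum>t\<in>F. c t * X t \<omega>)\<^sup>2) = N.expectation (\<lambda>\<omega>. (\<Sum>t\<in>F. c t * Y t \<omega>)\<^sup>2)"
    if F: "finite F" "F \<subseteq> T" for F c
  proof -
    obtain m v where
      chX: "\<And>u. char (distr M borel (\<lambda>\<omega>. \<Sum>t\<in>F. c t * X t \<omega>)) u = gauss_char m v u" and
      chY: "\<And>u. char (distr N borel (\<lambda>\<omega>. \<Sum>t\<in>F. c t * Y t \<omega>)) u = gauss_char m v u"
      using ch[OF F, of c] by blast
    have ZX: "(\<lambda>\<omega>. \<Sum>t\<in>F. c t * X t \<omega>) \<in> borel_measurable M"
      by measurable
    have ZY: "(\<lambda>\<omega>. \<Sum>t\<in>F. c t * Y t \<omega>) \<in> borel_measurable N"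
      by measurable
    show ?thesis
      using real_gaussian_if_gauss_char[OF M ZX chX] real_gaussian_if_gauss_char[OF N ZY chY]
        moments_if_gauss_char[OF M ZX chX] moments_if_gauss_char[OF N ZY chY] by simp
  qed
  have single: "integrable M (\<lambda>\<omega>. (X t \<omega>)\<^sup>2) \<and> integrable N (\<lambda>\<omega>. (Y t \<omega>)\<^sup>2)
      \<and> M.expectation (X t) = N.expectation (Y t) \<and> M.expectation (\<lambda>\<omega>. (X t \<omega>)\<^sup>2) = N.expectation (\<lambda>\<omega>. (Y t \<omega>)\<^sup>2)"
    if "t \<in> T" for t
    using lincomb[of "{t}" "\<lambda>_. 1"] that by simp
  have cross: "M.expectation (\<lambda>\<omega>. X s \<omega> * X t \<omega>) = N.expectation (\<lambda>\<omega>. Y s \<omega> * Y t \<omega>)"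
    if s: "s \<in> T" and t: "t \<in> T" for s t
  proof (cases "s = t")
    case True
    then show ?thesis using single[OF s] by (simp add: power2_eq_square)
  next
    case False
    then have "integrable M (\<lambda>\<omega>. (X s \<omega> + X t \<omega>)\<^sup>2) \<and> integrable N (\<lambda>\<omega>. (Y s \<omega> + Y t \<omega>)\<^sup>2)
        \<and> M.expectation (\<lambda>\<omega>. (X s \<omega> + X t \<omega>)\<^sup>2) = N.expectation (\<lambda>\<omega>. (Y s \<omega> + Y t \<omega>)\<^sup>2)"
      using lincomb[of "{s, t}" "\<lambda>_. 1"] s t by simp
    then show ?thesis
      using single[OF s] single[OF t] by (simp add: integral_mult_polarization)
  qed
  show ?thesis
  proof (intro conjI ballI)
    show "gaussian_process M X T" "gaussian_process N Y T"
      unfolding gaussian_process_def using lincomb by simp_all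
  qed (use single cross in simp_all)
qed

section \<open>Brownian increments and independence\<close>

lemma lift_Suc_mono_le_upto:
  fixes x :: "nat \<Rightarrow> 'a :: order"
  assumes x: "\<forall>i<n. x i < x (Suc i)" and "j \<le> k" "k \<le> n"
  shows "x j \<le> x k"
  using assms(2,3)
proof (induction k)
  case (Suc k)
  show ?case
  proof (cases "j = Suc k")
    case False
    with Suc have "x j \<le> x k" by simp
    also have "x k < x (Suc k)" using x Suc.prems by simp
    finally show ?thesis by simp
  qed simp
qed simp

lemma char_distr_scale:
  "Z \<in> borel_measurable M \<Longrightarrow> char (distr M borel (\<lambda>x. c * Z x)) u = char (distr M borel Z) (u * c)"
  by (simp add: char_distr_eq_integral mult_ac)

lemma prod_gauss_char:
  "(\<Prod>k\<in>A. gauss_char (m k) (v k) u) = gauss_char (\<Sum>k\<in>A. m k) (\<Sum>k\<in>A. v k) u"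
proof (induction A rule: infinite_finite_induct)
  case (insert k A)
  then show ?case by (simp add: gauss_char_mult)
qed (simp_all add: gauss_char_def)

lemma char_brownian_increments_sum:
  assumes B: "brownian_motion M B" and x: "\<forall>i<n. x i < x (Suc i)" "0 \<le> x 0"
  shows "char (distr M borel (\<lambda>\<omega>. \<Sum>k<n. \<gamma> k * (B (x (Suc k)) \<omega> - B (x k) \<omega>))) u
         = gauss_char 0 (\<Sum>k<n. (\<gamma> k)\<^sup>2 * (x (Suc k) - x k)) u"
proof -
  interpret prob_space M using B by (simp add: brownian_motion_def)
  have [measurable]: "\<And>t. B t \<in> borel_measurable M" using B by (simp add: brownian_motion_def)
  have "indep_vars (\<lambda>_. borel) (\<lambda>i \<omega>. B (x (Suc i)) \<omega> - B (x i) \<omega>) {..<n}"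
    using B x unfolding brownian_motion_def by blast
  then have indep: "indep_vars (\<lambda>_. borel) (\<lambda>i \<omega>. \<gamma> i * (B (x (Suc i)) \<omega> - B (x i) \<omega>)) {..<n}"
    using indep_vars_compose2[of _ _ _ "\<lambda>i y. \<gamma> i * y" "\<lambda>_. borel"] by simp
  have increment: "char (distr M borel (\<lambda>\<omega>. \<gamma> k * (B (x (Suc k)) \<omega> - B (x k) \<omega>))) u
      = gauss_char 0 ((\<gamma> k)\<^sup>2 * (x (Suc k) - x k)) u" if k: "k < n" for k
  proof -
    have lt: "x k < x (Suc k)" using x k by auto
    have "0 \<le> x k" using lift_Suc_mono_le_upto[OF x(1), of 0 k] x k by auto
    with lt have "distr M borel (\<lambda>\<omega>. B (x (Suc k)) \<omega> - B (x k) \<omega>)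
        = density lborel (normal_density 0 (sqrt (x (Suc k) - x k)))"
      using B unfolding brownian_motion_def distributed_def by (simp add: distr_lborel_eq_borel)
    with lt show ?thesis
      by (simp add: char_distr_scale char_normal_density gauss_char_scale)
  qed
  show ?thesis
    by (simp add: char_distr_sum[OF indep] increment prod_gauss_char)
qed

text \<open>Independence of I from the whole path of B, tested only against the bounded functions
  \<open>iexp\<close>: this is all the characteristic-function argument uses.\<close>

definition indep_path_iexp :: "'a measure \<Rightarrow> ('a \<Rightarrow> real) \<Rightarrow> (real \<Rightarrow> 'a \<Rightarrow> real) \<Rightarrow> bool" where
  "indep_path_iexp M I B \<longleftrightarrow> (\<forall>u \<Phi>. \<Phi> \<in> borel_measurable (Pi\<^sub>M {0..} (\<lambda>_. borel)) \<longrightarrow>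
     (CLINT \<omega>|M. iexp (u * I \<omega> + \<Phi> (path B \<omega>)))
       = (CLINT \<omega>|M. iexp (u * I \<omega>)) * (CLINT \<omega>|M. iexp (\<Phi> (path B \<omega>))))"

lemma measurable_path:
  "(\<And>t. B t \<in> borel_measurable M) \<Longrightarrow> path B \<in> measurable M (Pi\<^sub>M {0..} (\<lambda>_. borel))"
  unfolding path_def by (rule measurable_restrict) simp

lemma increments_sum_path:
  fixes x :: "nat \<Rightarrow> real"
  assumes "\<And>k. k \<le> n \<Longrightarrow> 0 \<le> x k"
  shows "(\<lambda>p. \<Sum>k<n. \<gamma> k * (p (x (Suc k)) - p (x k))) \<in> borel_measurable (Pi\<^sub>M {0..} (\<lambda>_. borel))"
    and "(\<Sum>k<n. \<gamma> k * (path B \<omega> (x (Suc k)) - path B \<omega> (x k)))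
         = (\<Sum>k<n. \<gamma> k * (B (x (Suc k)) \<omega> - B (x k) \<omega>))"
proof -
  show "(\<lambda>p. \<Sum>k<n. \<gamma> k * (p (x (Suc k)) - p (x k))) \<in> borel_measurable (Pi\<^sub>M {0..} (\<lambda>_. borel))"
    by (intro borel_measurable_sum borel_measurable_times borel_measurable_diff borel_measurable_const)
      (use assms in \<open>auto intro: measurable_component_singleton\<close>)
  show "(\<Sum>k<n. \<gamma> k * (path B \<omega> (x (Suc k)) - path B \<omega> (x k)))
         = (\<Sum>k<n. \<gamma> k * (B (x (Suc k)) \<omega> - B (x k) \<omega>))"
    using assms by (intro sum.cong) (auto simp: path_def)
qed

lemma char_add_brownian_increments:
  assumes B: "brownian_motion M B" and I: "I \<in> borel_measurable M" and indep: "indep_path_iexp M I B"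
    and x: "\<forall>i<n. x i < x (Suc i)" "0 \<le> x 0"
  shows "char (distr M borel (\<lambda>\<omega>. I \<omega> + (\<Sum>k<n. \<gamma> k * (B (x (Suc k)) \<omega> - B (x k) \<omega>)))) u
       = char (distr M borel I) u * gauss_char 0 (\<Sum>k<n. (\<gamma> k)\<^sup>2 * (x (Suc k) - x k)) u"
proof -
  have [measurable]: "\<And>t. B t \<in> borel_measurable M" using B by (simp add: brownian_motion_def)
  note [measurable] = I
  have x_nonneg: "0 \<le> x k" if "k \<le> n" for k
    using lift_Suc_mono_le_upto[OF x(1), of 0 k] x(2) that by simp
  note path = increments_sum_path[where x = x and n = n, OF x_nonneg, where \<gamma> = \<gamma>]
  define \<Phi> where "\<Phi> p = u * (\<Sum>k<n. \<gamma> k * (p (x (Suc k)) - p (x k)))" for p :: "real \<Rightarrow> real"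
  have \<Phi>: "\<Phi> \<in> borel_measurable (Pi\<^sub>M {0..} (\<lambda>_. borel))"
    unfolding \<Phi>_def by (intro borel_measurable_times borel_measurable_const path(1))
  let ?S = "\<lambda>\<omega>. \<Sum>k<n. \<gamma> k * (B (x (Suc k)) \<omega> - B (x k) \<omega>)"
  have "char (distr M borel (\<lambda>\<omega>. I \<omega> + ?S \<omega>)) u = (CLINT \<omega>|M. iexp (u * I \<omega> + \<Phi> (path B \<omega>)))"
    by (subst char_distr_eq_integral) (auto simp: \<Phi>_def path(2) distrib_left)
  also have "\<dots> = (CLINT \<omega>|M. iexp (u * I \<omega>)) * (CLINT \<omega>|M. iexp (\<Phi> (path B \<omega>)))"
    using indep \<Phi> unfolding indep_path_iexp_def by blast
  also have "\<dots> = char (distr M borel I) u * char (distr M borel ?S) u"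
    by (simp add: char_distr_eq_integral \<Phi>_def path(2))
  finally show ?thesis
    by (simp add: char_brownian_increments_sum[OF B x])
qed

lemma vimage_algebra_compose:
  assumes "Z \<in> measurable M N" "f \<in> measurable N K" "A \<in> sets K"
  shows "(\<lambda>\<omega>. f (Z \<omega>)) -` A \<inter> space M \<in> sets (vimage_algebra (space M) Z N)"
proof -
  have "Z -` (f -` A \<inter> space N) \<inter> space M \<in> sets (vimage_algebra (space M) Z N)"
    using measurable_sets[OF assms(2,3)] by (rule in_vimage_algebra)
  also have "Z -` (f -` A \<inter> space N) \<inter> space M = (\<lambda>\<omega>. f (Z \<omega>)) -` A \<inter> space M"
    using measurable_space[OF assms(1)] by auto
  finally show ?thesis .
qed

lemma (in prob_space) indep_vars_if_indep_sets:
  assumes "indep_sets S I" and "\<And>i. i \<in> I \<Longrightarrow> Y i \<in> measurable M (N i)"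
    and "\<And>i A. i \<in> I \<Longrightarrow> A \<in> sets (N i) \<Longrightarrow> Y i -` A \<inter> space M \<in> S i"
  shows "indep_vars N Y I"
  unfolding indep_vars_def2 using assms by (auto intro: indep_sets_mono_sets)

lemma indep3_rv_integral_iexp:
  fixes f1 :: "'b \<Rightarrow> real" and f2 :: "'c \<Rightarrow> real" and f3 :: "'d \<Rightarrow> real"
  assumes "prob_space M" and indep: "indep3_rv M M1 Z1 M2 Z2 M3 Z3"
    and [measurable]: "Z1 \<in> measurable M M1" "Z2 \<in> measurable M M2" "Z3 \<in> measurable M M3"
      "f1 \<in> borel_measurable M1" "f2 \<in> borel_measurable M2" "f3 \<in> borel_measurable M3"
  shows "(CLINT \<omega>|M. iexp (f1 (Z1 \<omega>) + f2 (Z2 \<omega>) + f3 (Z3 \<omega>)))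
       = (CLINT \<omega>|M. iexp (f1 (Z1 \<omega>))) * (CLINT \<omega>|M. iexp (f2 (Z2 \<omega>))) * (CLINT \<omega>|M. iexp (f3 (Z3 \<omega>)))"
proof -
  interpret prob_space M by fact
  define Y :: "nat \<Rightarrow> 'a \<Rightarrow> complex" where
    "Y i = (if i = 0 then (\<lambda>\<omega>. iexp (f1 (Z1 \<omega>))) else if i = 1 then (\<lambda>\<omega>. iexp (f2 (Z2 \<omega>)))
            else (\<lambda>\<omega>. iexp (f3 (Z3 \<omega>))))" for i
  have "indep_vars (\<lambda>_. borel) Y {0, 1, 2}"
    using indep unfolding indep3_rv_def
  proof (rule indep_vars_if_indep_sets)
    fix i :: nat and A :: "complex set" assume i: "i \<in> {0, 1, 2}" and A: "A \<in> sets borel"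
    have "(\<lambda>\<omega>. iexp (f1 (Z1 \<omega>))) -` A \<inter> space M \<in> sets (vimage_algebra (space M) Z1 M1)"
      "(\<lambda>\<omega>. iexp (f2 (Z2 \<omega>))) -` A \<inter> space M \<in> sets (vimage_algebra (space M) Z2 M2)"
      "(\<lambda>\<omega>. iexp (f3 (Z3 \<omega>))) -` A \<inter> space M \<in> sets (vimage_algebra (space M) Z3 M3)"
      by (rule vimage_algebra_compose[OF _ _ A]; measurable)+
    with i show "Y i -` A \<inter> space M \<in> (if i = 0 then sets (vimage_algebra (space M) Z1 M1)
        else if i = 1 then sets (vimage_algebra (space M) Z2 M2) else sets (vimage_algebra (space M) Z3 M3))"
      unfolding Y_def by auto
  next
    show "Y i \<in> borel_measurable M" for i
      unfolding Y_def by (cases "i = 0"; cases "i = 1"; simp; measurable)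
  qed
  then have "(CLINT \<omega>|M. (\<Prod>i\<in>{0, 1, 2}. Y i \<omega>)) = (\<Prod>i\<in>{0, 1, 2}. CLINT \<omega>|M. Y i \<omega>)"
    by (rule indep_vars_lebesgue_integral[rotated]) (auto simp: Y_def intro!: integrable_iexp)
  then show ?thesis
    by (simp add: Y_def distrib_left exp_add mult.assoc)
qed

lemma indep2_rv_integral_iexp:
  fixes f1 :: "'b \<Rightarrow> real" and f2 :: "'c \<Rightarrow> real"
  assumes "prob_space M" and indep: "indep2_rv M M1 Z1 M2 Z2"
    and [measurable]: "Z1 \<in> measurable M M1" "Z2 \<in> measurable M M2"
      "f1 \<in> borel_measurable M1" "f2 \<in> borel_measurable M2"
  shows "(CLINT \<omega>|M. iexp (f1 (Z1 \<omega>) + f2 (Z2 \<omega>)))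
       = (CLINT \<omega>|M. iexp (f1 (Z1 \<omega>))) * (CLINT \<omega>|M. iexp (f2 (Z2 \<omega>)))"
proof -
  interpret prob_space M by fact
  define Y :: "bool \<Rightarrow> 'a \<Rightarrow> complex" where
    "Y i = (if i then (\<lambda>\<omega>. iexp (f1 (Z1 \<omega>))) else (\<lambda>\<omega>. iexp (f2 (Z2 \<omega>))))" for i
  have "indep_vars (\<lambda>_. borel) Y UNIV"
    using indep unfolding indep2_rv_def indep_set_def
  proof (rule indep_vars_if_indep_sets)
    fix i :: bool and A :: "complex set" assume A: "A \<in> sets borel"
    have "(\<lambda>\<omega>. iexp (f1 (Z1 \<omega>))) -` A \<inter> space M \<in> sets (vimage_algebra (space M) Z1 M1)"
      "(\<lambda>\<omega>. iexp (f2 (Z2 \<omega>))) -` A \<inter> space M \<in> sets (vimage_algebra (space M) Z2 M2)"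
      by (rule vimage_algebra_compose[OF _ _ A]; measurable)+
    then show "Y i -` A \<inter> space M \<in> case_bool (sets (vimage_algebra (space M) Z1 M1))
        (sets (vimage_algebra (space M) Z2 M2)) i"
      unfolding Y_def by (cases i) auto
  next
    show "Y i \<in> borel_measurable M" for i
      unfolding Y_def by (cases i; simp; measurable)
  qed
  then have "(CLINT \<omega>|M. (\<Prod>i\<in>UNIV. Y i \<omega>)) = (\<Prod>i\<in>UNIV. CLINT \<omega>|M. Y i \<omega>)"
    by (rule indep_vars_lebesgue_integral[rotated]) (auto simp: Y_def intro!: integrable_iexp)
  then show ?thesis
    by (simp add: Y_def UNIV_bool distrib_left exp_add mult.commute)
qed

section \<open>Riemann sums along partitions of vanishing mesh\<close>

lemma uniform_grid_point_above:
  fixes T y :: real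
  assumes T: "T > 0" and y: "0 \<le> y" "y < T" and N: "N > 0"
  shows "\<exists>j\<le>N. y < T * real j / real N \<and> T * real j / real N \<le> y + T / real N"
proof -
  define j where "j = nat \<lfloor>y * N / T\<rfloor> + 1"
  have f0: "0 \<le> \<lfloor>y * N / T\<rfloor>" using T y by simp
  then have j: "real j = of_int \<lfloor>y * N / T\<rfloor> + 1" by (simp add: j_def)
  have "y * N / T < N" using y T N by (simp add: field_simps)
  then have "\<lfloor>y * N / T\<rfloor> < int N" by linarith
  then have "j \<le> N"
    using nat_less_iff[OF f0, of N] by (simp add: j_def)
  moreover have "y * N / T < real j" "real j \<le> y * N / T + 1"
    using j by linarith+
  then have "y < T * real j / real N" "T * real j / real N \<le> y + T / real N"
    using T N by (simp_all add: field_simps)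
  ultimately show ?thesis by blast
qed

lemma strict_enumeration:
  fixes P :: "'a :: linorder set"
  assumes "finite P" "P \<noteq> {}"
  obtains n x where "\<forall>i<n. x i < x (Suc i)" "\<And>i. i \<le> n \<Longrightarrow> x i \<in> P" "\<And>p. p \<in> P \<Longrightarrow> \<exists>k\<le>n. x k = p"
proof -
  define xs where "xs = sorted_list_of_set P"
  have set: "set xs = P" using assms by (simp add: xs_def)
  then have len: "length xs = Suc (length xs - 1)" using assms by (cases xs) auto
  have "\<forall>i<length xs - 1. xs ! i < xs ! Suc i"
    using strict_sorted_list_of_set[of P] len by (auto simp: xs_def sorted_wrt_iff_nth_less)
  moreover have "xs ! i \<in> P" if "i \<le> length xs - 1" for i
    using that len set by (metis le_imp_less_Suc nth_mem)
  moreover have "\<exists>k\<le>length xs - 1. xs ! k = p" if p: "p \<in> P" for p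
  proof -
    obtain k where "k < length xs" "xs ! k = p" using p set by (auto simp: in_set_conv_nth)
    then show ?thesis by (intro exI[of _ k]) auto
  qed
  ultimately show thesis by (rule that)
qed

lemma partition_through:
  fixes T d :: real
  assumes F: "finite F" "F \<subseteq> {0..T}" and T: "T \<ge> 0" and d: "d > 0"
  shows "\<exists>n x. x 0 = 0 \<and> x n = T \<and> (\<forall>i<n. x i < x (Suc i)) \<and> (\<forall>i<n. x (Suc i) - x i \<le> d)
              \<and> (\<forall>t\<in>F. \<exists>k\<le>n. x k = t)"
proof -
  obtain N :: nat where "T / d < N" using reals_Archimedean2 by blast
  moreover from T d have "0 \<le> T / d" by simp
  ultimately have N: "N > 0" by linarith
  with \<open>T / d < N\<close> d have "T / real N \<le> d"
    by (simp add: field_simps)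
  define P where "P = F \<union> {0, T} \<union> (\<lambda>j. T * real j / real N) ` {..N}"
  have "T * real j / real N \<in> {0..T}" if "j \<le> N" for j
    using that T N by (auto simp: field_simps intro!: mult_left_mono)
  then have Psub: "P \<subseteq> {0..T}" using F T by (auto simp: P_def)
  obtain n x where strict: "\<forall>i<n. x i < x (Suc i)"
    and inP: "\<And>i. i \<le> n \<Longrightarrow> x i \<in> P" and memP: "\<And>p. p \<in> P \<Longrightarrow> \<exists>k\<le>n. x k = p"
    using strict_enumeration[of P] F by (auto simp: P_def)
  have mono: "x i \<le> x j" if "i \<le> j" "j \<le> n" for i j
    using lift_Suc_mono_le_upto[OF strict that] .
  have x0: "x 0 = 0"
  proof -
    obtain k where "k \<le> n" "x k = 0" using memP[of 0] by (auto simp: P_def)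
    moreover have "0 \<le> x 0" using inP[of 0] Psub by auto
    ultimately show ?thesis using mono[of 0 k] by simp
  qed
  have xn: "x n = T"
  proof -
    obtain k where "k \<le> n" "x k = T" using memP[of T] by (auto simp: P_def)
    moreover have "x n \<le> T" using inP[of n] Psub by auto
    ultimately show ?thesis using mono[of k n] by simp
  qed
  have gap: "x (Suc i) - x i \<le> d" if i: "i < n" for i
  proof -
    have "x i < x n" using lift_Suc_mono_le_upto[OF strict, of "Suc i" n] strict i by force
    then have "T > 0" "0 \<le> x i" "x i < T" using inP[of i] Psub x0 xn mono[of 0 i] i by auto
    then obtain j where j: "j \<le> N" "x i < T * real j / real N" "T * real j / real N \<le> x i + T / real N"
      using uniform_grid_point_above N by blast
    then obtain l where l: "l \<le> n" "x l = T * real j / real N"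
      using memP by (auto simp: P_def)
    have "i < l"
    proof (rule ccontr)
      assume "\<not> i < l"
      then have "x l \<le> x i" using mono[of l i] i by simp
      with l j show False by simp
    qed
    then have "x (Suc i) \<le> x l" using mono[of "Suc i" l] l by simp
    then show ?thesis using l j \<open>T / real N \<le> d\<close> by simp
  qed
  show ?thesis
    using x0 xn strict gap memP by (intro exI[of _ n] exI[of _ x]) (simp add: P_def)
qed

lemma integral_partition_split:
  fixes f :: "real \<Rightarrow> real"
  assumes x: "\<forall>i<n. x i < x (Suc i)" and ab: "a \<le> b" "b \<le> n"
    and f: "continuous_on {x a..x b} f"
  shows "integral {x a..x b} f = (\<Sum>i\<in>{a..<b}. integral {x i..x (Suc i)} f)"
  using ab f
proof (induction b)
  case (Suc b)
  show ?case
  proof (cases "a = Suc b")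
    case False
    then have ab': "a \<le> b" using Suc by simp
    have m1: "x a \<le> x b" using lift_Suc_mono_le_upto[OF x ab'] Suc by simp
    have m2: "x b \<le> x (Suc b)" using x Suc by (simp add: less_imp_le)
    have "integral {x a..x (Suc b)} f = integral {x a..x b} f + integral {x b..x (Suc b)} f"
      by (rule Henstock_Kurzweil_Integration.integral_combine[symmetric, OF m1 m2])
         (rule integrable_continuous_interval[OF Suc.prems(3)])
    also have "integral {x a..x b} f = (\<Sum>i\<in>{a..<b}. integral {x i..x (Suc i)} f)"
      using Suc.IH[OF ab'] Suc.prems continuous_on_subset m2 by fastforce
    finally show ?thesis using ab' by simp
  qed simp
qed simp

lemma tagged_sum_integral_error:
  fixes h g :: "real \<Rightarrow> real"
  assumes x: "\<forall>i<n. x i < x (Suc i)" and j: "j \<le> n"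
    and mesh: "\<forall>i<n. x (Suc i) - x i \<le> d"
    and h: "continuous_on {x 0..x j} h" and g: "continuous_on {x 0..x j} g"
    and H: "\<And>w. w \<in> {x 0..x j} \<Longrightarrow> \<bar>h w\<bar> \<le> H"
    and tag: "\<And>k. k < j \<Longrightarrow> x k \<le> y k \<and> y k \<le> x (Suc k)"
    and unif: "\<And>a b. a \<in> {x 0..x j} \<Longrightarrow> b \<in> {x 0..x j} \<Longrightarrow> \<bar>a - b\<bar> \<le> d \<Longrightarrow> \<bar>g a - g b\<bar> \<le> e"
  shows "\<bar>(\<Sum>k<j. integral {x k..x (Suc k)} h * g (y k)) - integral {x 0..x j} (\<lambda>w. h w * g w)\<bar>
          \<le> e * H * (x j - x 0)"
proof -
  have hg: "continuous_on {x 0..x j} (\<lambda>w. h w * g w)" using h g by (intro continuous_intros)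
  have cell: "\<bar>integral {x k..x (Suc k)} h * g (y k) - integral {x k..x (Suc k)} (\<lambda>w. h w * g w)\<bar>
      \<le> e * H * (x (Suc k) - x k)" if k: "k < j" for k
  proof -
    have lt: "x k < x (Suc k)" using x k j by auto
    have sub: "{x k..x (Suc k)} \<subseteq> {x 0..x j}"
      using lift_Suc_mono_le_upto[OF x, of 0 k] lift_Suc_mono_le_upto[OF x, of "Suc k" j] k j by auto
    have hc: "continuous_on {x k..x (Suc k)} h" and gc: "continuous_on {x k..x (Suc k)} g"
      using continuous_on_subset[OF h sub] continuous_on_subset[OF g sub] .
    have "integral {x k..x (Suc k)} h * g (y k) - integral {x k..x (Suc k)} (\<lambda>w. h w * g w)
        = integral {x k..x (Suc k)} (\<lambda>w. h w * (g (y k) - g w))"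
      using hc gc by (simp add: right_diff_distrib integral_diff integrable_continuous_interval
          continuous_intros mult_ac)
    also have "\<bar>\<dots>\<bar> \<le> (H * e) * (x (Suc k) - x k)"
    proof (rule integral_bound[where 'a = real, unfolded real_norm_def])
      show "continuous_on {x k..x (Suc k)} (\<lambda>w. h w * (g (y k) - g w))"
        using hc gc by (intro continuous_intros)
      fix w assume w: "w \<in> {x k..x (Suc k)}"
      have "x (Suc k) - x k \<le> d" using mesh k j by simp
      then have "\<bar>y k - w\<bar> \<le> d" using w tag[OF k] by auto
      then have "\<bar>g (y k) - g w\<bar> \<le> e" using unif sub w tag[OF k] by auto
      moreover have "\<bar>h w\<bar> \<le> H" using H sub w by auto
      ultimately show "\<bar>h w * (g (y k) - g w)\<bar> \<le> H * e"
        by (simp add: abs_mult mult_mono')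
    qed (use lt in simp)
    finally show ?thesis by (simp add: mult_ac)
  qed
  have "integral {x 0..x j} (\<lambda>w. h w * g w) = (\<Sum>k<j. integral {x k..x (Suc k)} (\<lambda>w. h w * g w))"
    using integral_partition_split[OF x _ j hg] by (simp add: atLeast0LessThan)
  then have "\<bar>(\<Sum>k<j. integral {x k..x (Suc k)} h * g (y k)) - integral {x 0..x j} (\<lambda>w. h w * g w)\<bar>
      \<le> (\<Sum>k<j. \<bar>integral {x k..x (Suc k)} h * g (y k) - integral {x k..x (Suc k)} (\<lambda>w. h w * g w)\<bar>)"
    by (simp add: sum_subtractf[symmetric] sum_abs)
  also have "\<dots> \<le> (\<Sum>k<j. e * H * (x (Suc k) - x k))"
    by (rule sum_mono) (simp add: cell)
  also have "\<dots> = e * H * (x j - x 0)"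
    by (simp add: sum_distrib_left[symmetric] sum_lessThan_telescope)
  finally show ?thesis .
qed

lemma summation_by_parts_tail_sums:
  fixes Q a :: "nat \<Rightarrow> real"
  shows "(\<Sum>k<j. (\<alpha> + (\<Sum>i\<in>{k..<j}. Q i)) * (a (Suc k) - a k))
       = \<alpha> * (a j - a 0) + (\<Sum>i<j. Q i * (a (Suc i) - a 0))"
proof (induction j)
  case (Suc j)
  have "(\<Sum>k<j. (\<alpha> + (\<Sum>i\<in>{k..<Suc j}. Q i)) * (a (Suc k) - a k))
      = (\<Sum>k<j. (\<alpha> + (\<Sum>i\<in>{k..<j}. Q i)) * (a (Suc k) - a k)) + Q j * (\<Sum>k<j. a (Suc k) - a k)"
    by (simp add: sum_distrib_left sum.distrib[symmetric] algebra_simps)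
  with Suc.IH show ?case
    by (simp add: sum_lessThan_telescope algebra_simps)
qed simp

locale vanishing_mesh =
  fixes x :: "nat \<Rightarrow> nat \<Rightarrow> real" and n :: "nat \<Rightarrow> nat"
  assumes start: "x m 0 = 0"
    and increasing: "\<forall>i<n m. x m i < x m (Suc i)"
    and mesh: "\<forall>i<n m. x m (Suc i) - x m i \<le> 1 / (real m + 1)"
begin

lemma mono: "j \<le> k \<Longrightarrow> k \<le> n m \<Longrightarrow> x m j \<le> x m k"
  by (rule lift_Suc_mono_le_upto[OF increasing])

lemma step_le: "k < j \<Longrightarrow> j \<le> n m \<Longrightarrow> x m k \<le> x m (Suc k)"
  using increasing by (simp add: less_imp_le)

lemma tagged_sum_error_eventually_le:
  fixes h g :: "real \<Rightarrow> real"
  assumes j: "\<And>m. j m \<le> n m" "\<And>m. x m (j m) = L"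
    and h: "continuous_on {0..L} h" and g: "continuous_on {0..L} g"
    and H: "\<And>w. w \<in> {0..L} \<Longrightarrow> \<bar>h w\<bar> \<le> H"
    and tag: "\<And>m k. k < j m \<Longrightarrow> x m k \<le> y m k \<and> y m k \<le> x m (Suc k)"
    and e: "e > 0"
  shows "\<exists>N. \<forall>m\<ge>N. \<bar>(\<Sum>k<j m. integral {x m k..x m (Suc k)} h * g (y m k))
                      - integral {0..L} (\<lambda>w. h w * g w)\<bar> \<le> e * H * L"
proof -
  have "uniformly_continuous_on {0..L} g"
    by (rule compact_uniformly_continuous[OF g compact_Icc])
  with e obtain d where d: "d > 0" "\<And>a b. a \<in> {0..L} \<Longrightarrow> b \<in> {0..L} \<Longrightarrow> dist b a < d \<Longrightarrow> dist (g b) (g a) < e"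
    unfolding uniformly_continuous_on_def by metis
  obtain N where N: "inverse (real (Suc N)) < d"
    using reals_Archimedean[OF d(1)] by blast
  have "\<bar>(\<Sum>k<j m. integral {x m k..x m (Suc k)} h * g (y m k)) - integral {0..L} (\<lambda>w. h w * g w)\<bar>
      \<le> e * H * L" if m: "m \<ge> N" for m
  proof -
    have "1 / (real m + 1) \<le> inverse (real (Suc N))"
      using m by (simp add: inverse_eq_divide frac_le)
    with N have md: "1 / (real m + 1) < d" by linarith
    have "\<bar>(\<Sum>k<j m. integral {x m k..x m (Suc k)} h * g (y m k)) - integral {x m 0..x m (j m)} (\<lambda>w. h w * g w)\<bar>
        \<le> e * H * (x m (j m) - x m 0)"
    proof (rule tagged_sum_integral_error[OF increasing j(1) mesh])
      show "continuous_on {x m 0..x m (j m)} h" "continuous_on {x m 0..x m (j m)} g"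
        using h g by (simp_all add: start j)
      show "\<And>w. w \<in> {x m 0..x m (j m)} \<Longrightarrow> \<bar>h w\<bar> \<le> H"
        using H by (simp add: start j)
      show "\<And>k. k < j m \<Longrightarrow> x m k \<le> y m k \<and> y m k \<le> x m (Suc k)"
        by (rule tag)
      fix a b assume ab: "a \<in> {x m 0..x m (j m)}" "b \<in> {x m 0..x m (j m)}" "\<bar>a - b\<bar> \<le> 1 / (real m + 1)"
      then have "dist (g b) (g a) < e"
        using d(2)[of a b] md by (simp add: start j dist_real_def abs_minus_commute)
      then show "\<bar>g a - g b\<bar> \<le> e" by (simp add: dist_real_def abs_minus_commute)
    qed
    then show ?thesis by (simp add: start j)
  qed
  then show ?thesis by blast
qed

lemma tagged_sum_tendsto:
  fixes h g :: "real \<Rightarrow> real"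
  assumes j: "\<And>m. j m \<le> n m" "\<And>m. x m (j m) = L"
    and h: "continuous_on {0..L} h" and g: "continuous_on {0..L} g"
    and tag: "\<And>m k. k < j m \<Longrightarrow> x m k \<le> y m k \<and> y m k \<le> x m (Suc k)"
  shows "(\<lambda>m. \<Sum>k<j m. integral {x m k..x m (Suc k)} h * g (y m k)) \<longlonglongrightarrow> integral {0..L} (\<lambda>w. h w * g w)"
proof (rule LIMSEQ_I)
  fix r :: real assume r: "r > 0"
  have L: "L \<ge> 0" using mono[of 0 "j 0" 0] j start by simp
  obtain H where H: "H \<ge> 0" "\<And>w. w \<in> {0..L} \<Longrightarrow> \<bar>h w\<bar> \<le> H"
    using continuous_on_compact_bound[OF compact_Icc h] by (metis real_norm_def)
  define e where "e = r / (2 * (H + 1) * (L + 1))"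
  have D: "0 < 2 * (H + 1) * (L + 1)" using H L by simp
  have "H * L \<le> (H + 1) * (L + 1)" using H L by (intro mult_mono) auto
  with D have "H * L < 2 * (H + 1) * (L + 1)" by linarith
  then have "r * (H * L) < r * (2 * (H + 1) * (L + 1))" using r by simp
  with D have "e * H * L < r" by (simp add: e_def field_simps)
  moreover have "e > 0" using r D by (simp add: e_def)
  then obtain N where "\<forall>m\<ge>N. \<bar>(\<Sum>k<j m. integral {x m k..x m (Suc k)} h * g (y m k))
      - integral {0..L} (\<lambda>w. h w * g w)\<bar> \<le> e * H * L"
    using tagged_sum_error_eventually_le[OF j h g H(2) tag] by blast
  ultimately show "\<exists>N. \<forall>m\<ge>N. norm ((\<Sum>k<j m. integral {x m k..x m (Suc k)} h * g (y m k))
      - integral {0..L} (\<lambda>w. h w * g w)) < r"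
    by (intro exI[of _ N]) (auto intro: le_less_trans)
qed

lemma riemann_sum_tendsto:
  assumes j: "\<And>m. j m \<le> n m" "\<And>m. x m (j m) = L" and f: "continuous_on {0..L} f"
  shows "(\<lambda>m. \<Sum>k<j m. f (x m k) * (x m (Suc k) - x m k)) \<longlonglongrightarrow> integral {0..L} f"
proof -
  have step: "x m k \<le> x m (Suc k)" if "k < j m" for m k
    using step_le[OF that j(1)] .
  then have "(\<lambda>m. \<Sum>k<j m. integral {x m k..x m (Suc k)} (\<lambda>_. 1) * f (x m k))
      \<longlonglongrightarrow> integral {0..L} (\<lambda>w. 1 * f w)"
    by (intro tagged_sum_tendsto[OF j _ f]) auto
  moreover have "(\<Sum>k<j m. integral {x m k..x m (Suc k)} (\<lambda>_. 1) * f (x m k))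
      = (\<Sum>k<j m. f (x m k) * (x m (Suc k) - x m k))" for m
    using step by (intro sum.cong) auto
  ultimately show ?thesis by simp
qed

text \<open>Summation by parts turns the Ito-type sum into a Riemann-Stieltjes sum against the
  path itself, which converges for every continuous path.\<close>

lemma kernel_increment_sum_tendsto:
  fixes q b :: "real \<Rightarrow> real"
  assumes j: "\<And>m. j m \<le> n m" "\<And>m. x m (j m) = t"
    and q: "continuous_on {0..t} q" and b: "continuous_on {0..t} b" and b0: "b 0 = 0"
  shows "(\<lambda>m. \<Sum>k<j m. (\<alpha> + integral {x m k..t} q) * (b (x m (Suc k)) - b (x m k)))
         \<longlonglongrightarrow> \<alpha> * b t + integral {0..t} (\<lambda>w. q w * b w)"
proof -
  have "(\<Sum>k<j m. (\<alpha> + integral {x m k..t} q) * (b (x m (Suc k)) - b (x m k)))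
      = \<alpha> * b t + (\<Sum>i<j m. integral {x m i..x m (Suc i)} q * b (x m (Suc i)))" for m
  proof -
    have "integral {x m k..t} q = (\<Sum>i\<in>{k..<j m}. integral {x m i..x m (Suc i)} q)" if "k < j m" for k
    proof -
      have "0 \<le> x m k" using mono[of 0 k m] that j(1)[of m] start by simp
      then have "{x m k..x m (j m)} \<subseteq> {0..t}" using j by simp
      then show ?thesis
        using integral_partition_split[OF increasing _ j(1), where a = k and f = q] that j continuous_on_subset[OF q]
        by simp
    qed
    then have "(\<Sum>k<j m. (\<alpha> + integral {x m k..t} q) * (b (x m (Suc k)) - b (x m k)))
        = (\<Sum>k<j m. (\<alpha> + (\<Sum>i\<in>{k..<j m}. integral {x m i..x m (Suc i)} q)) * (b (x m (Suc k)) - b (x m k)))"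
      by (intro sum.cong) auto
    also have "\<dots> = \<alpha> * (b (x m (j m)) - b (x m 0))
        + (\<Sum>i<j m. integral {x m i..x m (Suc i)} q * (b (x m (Suc i)) - b (x m 0)))"
      by (rule summation_by_parts_tail_sums)
    finally show ?thesis
      using j start b0 by simp
  qed
  moreover have "(\<lambda>m. \<Sum>i<j m. integral {x m i..x m (Suc i)} q * b (x m (Suc i))) \<longlonglongrightarrow> integral {0..t} (\<lambda>w. q w * b w)"
    using step_le[OF _ j(1)] by (intro tagged_sum_tendsto[OF j q b]) auto
  ultimately show ?thesis
    by (simp add: tendsto_add_const_iff)
qed

end

lemma vanishing_mesh_through:
  assumes F: "finite F" "F \<subseteq> {0..}"
  obtains x n idx where "vanishing_mesh x n" "\<And>m t. t \<in> F \<Longrightarrow> idx m t \<le> n m \<and> x m (idx m t) = t"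
proof -
  define T where "T = Max (insert 0 F)"
  have FT: "F \<subseteq> {0..T}" and T: "T \<ge> 0" using F by (auto simp: T_def)
  define good where "good m n x \<longleftrightarrow> x 0 = 0 \<and> (\<forall>i<n. x i < x (Suc i))
      \<and> (\<forall>i<n. x (Suc i) - x i \<le> 1 / (real m + 1)) \<and> (\<forall>t\<in>F. \<exists>k\<le>n. (x k :: real) = t)" for m n x
  have "\<forall>m. \<exists>p. good m (fst p) (snd p)"
  proof
    fix m :: nat
    have "1 / (real m + 1) > 0" by simp
    from partition_through[OF F(1) FT T this] obtain n x where "good m n x"
      unfolding good_def by blast
    then show "\<exists>p. good m (fst p) (snd p)"
      by (intro exI[of _ "(n, x)"]) simp
  qed
  from choice[OF this] obtain p where p: "\<And>m. good m (fst (p m)) (snd (p m))" by blast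
  define n where "n m = fst (p m)" for m
  define x where "x m = snd (p m)" for m
  define idx where "idx m t = (SOME k. k \<le> n m \<and> x m k = t)" for m t
  have "vanishing_mesh x n"
    using p by unfold_locales (simp_all add: good_def n_def x_def)
  moreover have "idx m t \<le> n m \<and> x m (idx m t) = t" if "t \<in> F" for m t
    unfolding idx_def by (rule someI_ex) (use p[of m] that in \<open>auto simp: good_def n_def x_def\<close>)
  ultimately show thesis using that by blast
qed

section \<open>Wiener integrals of deterministic kernels\<close>

text \<open>For a Brownian motion B with B 0 = 0, integration by parts gives
  \<open>\<alpha> * B t + \<integral>\<^sub>0\<^sup>t q t w * B w dw = \<integral>\<^sub>0\<^sup>t wiener_kernel \<alpha> q t w dB\<^sub>w\<close>; the variance of
  \<open>\<Sum>t\<in>F. c t * \<integral>\<^sub>0\<^sup>t K t w dB\<^sub>w\<close> is \<open>wiener_variance K F c\<close> by the Ito isometry.\<close>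

definition wiener_kernel :: "real \<Rightarrow> (real \<Rightarrow> real \<Rightarrow> real) \<Rightarrow> real \<Rightarrow> real \<Rightarrow> real" where
  "wiener_kernel \<alpha> q t w = \<alpha> + integral {w..t} (q t)"

definition wiener_variance :: "(real \<Rightarrow> real \<Rightarrow> real) \<Rightarrow> real set \<Rightarrow> (real \<Rightarrow> real) \<Rightarrow> real" where
  "wiener_variance K F c = (\<Sum>s\<in>F. \<Sum>t\<in>F. c s * c t * integral {0..min s t} (\<lambda>w. K s w * K t w))"

lemma continuous_on_wiener_kernel:
  "continuous_on {0..t} (q t) \<Longrightarrow> continuous_on {0..t} (wiener_kernel \<alpha> q t)"
  unfolding wiener_kernel_def
  by (intro continuous_intros indefinite_integral_continuous_1' integrable_continuous_interval)

lemma sum_lessThan_if_less: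
  fixes m n :: nat
  assumes "m \<le> n"
  shows "(\<Sum>k<n. if k < m then f k else 0) = (\<Sum>k<m. f k)"
proof -
  have "{..<n} \<inter> {..<m} = {..<m}" using assms by auto
  then show ?thesis using sum.inter_restrict[of "{..<n}" f "{..<m}"] by (simp add: Int_commute)
qed

lemma sum_truncated_swap:
  fixes c :: "'a \<Rightarrow> 'b :: comm_semiring_1" and j :: "'a \<Rightarrow> nat"
  assumes "\<forall>t\<in>F. j t \<le> n"
  shows "(\<Sum>k<n. (\<Sum>t\<in>F. c t * (if k < j t then f t k else 0)) * d k)
       = (\<Sum>t\<in>F. c t * (\<Sum>k<j t. f t k * d k))"
proof -
  have "(\<Sum>k<n. (\<Sum>t\<in>F. c t * (if k < j t then f t k else 0)) * d k)
      = (\<Sum>k<n. \<Sum>t\<in>F. c t * (if k < j t then f t k * d k else 0))"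
    by (auto simp: sum_distrib_right mult.assoc intro!: sum.cong)
  also have "\<dots> = (\<Sum>t\<in>F. c t * (\<Sum>k<n. if k < j t then f t k * d k else 0))"
    by (simp add: sum.swap[of _ "{..<n}"] sum_distrib_left)
  also have "\<dots> = (\<Sum>t\<in>F. c t * (\<Sum>k<j t. f t k * d k))"
    using assms by (intro sum.cong refl) (subst sum_lessThan_if_less; simp)
  finally show ?thesis .
qed

lemma sum_truncated_square:
  fixes c :: "'a \<Rightarrow> 'b :: comm_semiring_1" and j :: "'a \<Rightarrow> nat"
  assumes "\<forall>t\<in>F. j t \<le> n"
  shows "(\<Sum>k<n. (\<Sum>t\<in>F. c t * (if k < j t then f t k else 0))\<^sup>2 * d k)
       = (\<Sum>s\<in>F. \<Sum>t\<in>F. c s * c t * (\<Sum>k<min (j s) (j t). f s k * f t k * d k))"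
proof -
  have pointwise: "(\<Sum>t\<in>F. c t * (if k < j t then f t k else 0))\<^sup>2 * d k
      = (\<Sum>s\<in>F. \<Sum>t\<in>F. c s * c t * (if k < min (j s) (j t) then f s k * f t k * d k else 0))" for k
  proof -
    have "(\<Sum>t\<in>F. c t * (if k < j t then f t k else 0))\<^sup>2 * d k = (\<Sum>s\<in>F. \<Sum>t\<in>F.
        (c s * (if k < j s then f s k else 0)) * (c t * (if k < j t then f t k else 0)) * d k)"
      unfolding power2_eq_square sum_product by (simp add: sum_distrib_right)
    also have "\<dots> = (\<Sum>s\<in>F. \<Sum>t\<in>F. c s * c t * (if k < min (j s) (j t) then f s k * f t k * d k else 0))"
      by (intro sum.cong refl) (simp add: mult_ac)
    finally show ?thesis .
  qed
  then have "(\<Sum>k<n. (\<Sum>t\<in>F. c t * (if k < j t then f t k else 0))\<^sup>2 * d k)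
      = (\<Sum>s\<in>F. \<Sum>t\<in>F. c s * c t * (\<Sum>k<n. if k < min (j s) (j t) then f s k * f t k * d k else 0))"
    by (simp only: pointwise sum.swap[of _ "{..<n}"] sum_distrib_left)
  also have "\<dots> = (\<Sum>s\<in>F. \<Sum>t\<in>F. c s * c t * (\<Sum>k<min (j s) (j t). f s k * f t k * d k))"
  proof (intro sum.cong refl)
    fix s t assume "s \<in> F" "t \<in> F"
    with assms have "min (j s) (j t) \<le> n" by (simp add: min_le_iff_disj)
    then show "c s * c t * (\<Sum>k<n. if k < min (j s) (j t) then f s k * f t k * d k else 0)
        = c s * c t * (\<Sum>k<min (j s) (j t). f s k * f t k * d k)"
      by (simp only: sum_lessThan_if_less)
  qed
  finally show ?thesis .
qed

lemma char_distr_tendsto_AE: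
  assumes "prob_space M" and [measurable]: "\<And>m. Z m \<in> borel_measurable M" "Z' \<in> borel_measurable M"
    and lim: "AE \<omega> in M. (\<lambda>m. Z m \<omega>) \<longlonglongrightarrow> Z' \<omega>"
  shows "(\<lambda>m. char (distr M borel (Z m)) u) \<longlonglongrightarrow> char (distr M borel Z') u"
proof -
  interpret prob_space M by fact
  have "(\<lambda>m. CLINT \<omega>|M. iexp (u * Z m \<omega>)) \<longlonglongrightarrow> (CLINT \<omega>|M. iexp (u * Z' \<omega>))"
  proof (rule integral_dominated_convergence[where w="\<lambda>_. 1"])
    show "AE \<omega> in M. (\<lambda>m. iexp (u * Z m \<omega>)) \<longlonglongrightarrow> iexp (u * Z' \<omega>)"
      using lim by eventually_elim (intro tendsto_intros)
  qed (simp_all add: norm_exp_i_times)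
  then show ?thesis by (simp add: char_distr_eq_integral)
qed

lemma (in vanishing_mesh) truncated_square_sum_tendsto:
  assumes idx: "\<And>m t. t \<in> F \<Longrightarrow> idx m t \<le> n m \<and> x m (idx m t) = t"
    and K: "\<And>t. t \<in> F \<Longrightarrow> continuous_on {0..t} (K t)"
  shows "(\<lambda>m. \<Sum>k<n m. (\<Sum>t\<in>F. c t * (if k < idx m t then K t (x m k) else 0))\<^sup>2 * (x m (Suc k) - x m k))
         \<longlonglongrightarrow> wiener_variance K F c"
proof -
  have "\<forall>t\<in>F. idx m t \<le> n m" for m using idx by blast
  note square = sum_truncated_square[OF this]
  show ?thesis
    unfolding square wiener_variance_def
  proof (intro tendsto_sum tendsto_mult_left)
    fix s t assume st: "s \<in> F" "t \<in> F"
    have "min (idx m s) (idx m t) \<le> n m" "x m (min (idx m s) (idx m t)) = min s t" for m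
      using idx[OF st(1), of m] idx[OF st(2), of m] mono[of "idx m s" "idx m t" m] mono[of "idx m t" "idx m s" m]
      by (auto simp: min_def)
    moreover have "continuous_on {0..min s t} (K r)" if "r \<in> {s, t}" for r
      using K[of r] st that by (auto elim!: continuous_on_subset)
    then have "continuous_on {0..min s t} (\<lambda>w. K s w * K t w)"
      by (intro continuous_intros) auto
    ultimately show "(\<lambda>m. \<Sum>k<min (idx m s) (idx m t). K s (x m k) * K t (x m k) * (x m (Suc k) - x m k))
        \<longlonglongrightarrow> integral {0..min s t} (\<lambda>w. K s w * K t w)"
      by (rule riemann_sum_tendsto)
  qed
qed

lemma (in vanishing_mesh) truncated_increment_sum_tendsto:
  assumes idx: "\<And>m t. t \<in> F \<Longrightarrow> idx m t \<le> n m \<and> x m (idx m t) = t"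
    and q: "\<And>t. t \<in> F \<Longrightarrow> continuous_on {0..t} (q t)"
    and b: "continuous_on {0..} b" and b0: "b 0 = 0"
  shows "(\<lambda>m. \<Sum>k<n m. (\<Sum>t\<in>F. c t * (if k < idx m t then wiener_kernel \<alpha> q t (x m k) else 0))
            * (b (x m (Suc k)) - b (x m k)))
         \<longlonglongrightarrow> (\<Sum>t\<in>F. c t * (\<alpha> * b t + integral {0..t} (\<lambda>w. q t w * b w)))"
proof -
  have "\<forall>t\<in>F. idx m t \<le> n m" for m using idx by blast
  note swap = sum_truncated_swap[OF this]
  show ?thesis
    unfolding swap wiener_kernel_def
  proof (intro tendsto_sum tendsto_mult_left)
    fix t assume t: "t \<in> F"
    show "(\<lambda>m. \<Sum>k<idx m t. (\<alpha> + integral {x m k..t} (q t)) * (b (x m (Suc k)) - b (x m k)))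
        \<longlonglongrightarrow> \<alpha> * b t + integral {0..t} (\<lambda>w. q t w * b w)"
    proof (rule kernel_increment_sum_tendsto)
      show "continuous_on {0..t} b"
        using b by (rule continuous_on_subset) auto
    qed (use idx[OF t] q[OF t] b0 in auto)
  qed
qed

lemma char_add_wiener_functional:
  assumes B: "brownian_motion M B" and F: "finite F" "F \<subseteq> {0..}"
    and q: "\<And>t. t \<in> F \<Longrightarrow> continuous_on {0..t} (q t)"
    and I: "I \<in> borel_measurable M" and indep: "indep_path_iexp M I B"
    and Z: "Z \<in> borel_measurable M"
    and Z_eq: "AE \<omega> in M. Z \<omega> = I \<omega> + (\<Sum>t\<in>F. c t * (\<alpha> * B t \<omega> + integral {0..t} (\<lambda>w. q t w * B w \<omega>)))"
  shows "char (distr M borel Z) u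
       = char (distr M borel I) u * gauss_char 0 (wiener_variance (wiener_kernel \<alpha> q) F c) u"
proof -
  have M: "prob_space M" and [measurable]: "\<And>t. B t \<in> borel_measurable M"
    and B_ae: "AE \<omega> in M. B 0 \<omega> = 0" "AE \<omega> in M. continuous_on {0..} (\<lambda>t. B t \<omega>)"
    using B by (simp_all add: brownian_motion_def)
  note [measurable] = I Z
  obtain x n idx where "vanishing_mesh x n" and idx: "\<And>m t. t \<in> F \<Longrightarrow> idx m t \<le> n m \<and> x m (idx m t) = t"
    using vanishing_mesh_through[OF F] by blast
  interpret vanishing_mesh x n by fact
  define \<gamma> where "\<gamma> m k = (\<Sum>t\<in>F. c t * (if k < idx m t then wiener_kernel \<alpha> q t (x m k) else 0))" for m k
  define S where "S m \<omega> = (\<Sum>k<n m. \<gamma> m k * (B (x m (Suc k)) \<omega> - B (x m k) \<omega>))" for m \<omega>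
  have "(\<lambda>m. char (distr M borel (\<lambda>\<omega>. I \<omega> + S m \<omega>)) u)
      = (\<lambda>m. char (distr M borel I) u * gauss_char 0 (\<Sum>k<n m. (\<gamma> m k)\<^sup>2 * (x m (Suc k) - x m k)) u)"
    unfolding S_def by (intro ext char_add_brownian_increments[OF B I indep increasing]) (simp add: start)
  also have "\<dots> \<longlonglongrightarrow> char (distr M borel I) u * gauss_char 0 (wiener_variance (wiener_kernel \<alpha> q) F c) u"
    using truncated_square_sum_tendsto[OF idx continuous_on_wiener_kernel[where q = q, OF q]]
    unfolding \<gamma>_def gauss_char_def by (auto intro!: tendsto_intros)
  finally have "(\<lambda>m. char (distr M borel (\<lambda>\<omega>. I \<omega> + S m \<omega>)) u)
      \<longlonglongrightarrow> char (distr M borel I) u * gauss_char 0 (wiener_variance (wiener_kernel \<alpha> q) F c) u" .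
  moreover have "AE \<omega> in M. (\<lambda>m. I \<omega> + S m \<omega>) \<longlonglongrightarrow> Z \<omega>"
    using Z_eq B_ae
  proof eventually_elim
    case (elim \<omega>)
    then show ?case
      unfolding S_def \<gamma>_def
      by (auto intro!: tendsto_add truncated_increment_sum_tendsto[OF idx q])
  qed
  then have "(\<lambda>m. char (distr M borel (\<lambda>\<omega>. I \<omega> + S m \<omega>)) u) \<longlonglongrightarrow> char (distr M borel Z) u"
    by (intro char_distr_tendsto_AE[OF M]) (simp_all add: S_def)
  ultimately show ?thesis
    using LIMSEQ_unique by blast
qed

section \<open>Pathwise solution of the two equations\<close>

lemma has_real_derivative_exp_diff:
  "((\<lambda>w. exp (w - s)) has_real_derivative exp (w - s)) (at w within S)"
  by (auto intro!: derivative_eq_intros)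

lemma linear_ode_exp_solution:
  fixes z g :: "real \<Rightarrow> real"
  assumes T: "T \<ge> 0" and zc: "continuous_on {0..T} z" and gc: "continuous_on {0..T} g"
    and eq: "\<And>u. u \<in> {0..T} \<Longrightarrow> z u = z 0 + integral {0..u} (\<lambda>s. - z s + g s)"
  shows "z T = exp (- T) * z 0 + integral {0..T} (\<lambda>s. exp (s - T) * g s)"
proof -
  define h where "h s = - z s + g s" for s
  have hc: "continuous_on {0..T} h" unfolding h_def using zc gc by (intro continuous_intros)
  have egc: "continuous_on {0..T} (\<lambda>s. exp s * g s)" using gc by (intro continuous_intros)
  define y where "y u = exp u * (z 0 + integral {0..u} h) - integral {0..u} (\<lambda>s. exp s * g s)" for u
  have "(y has_real_derivative 0) (at u within {0..T})" if u: "u \<in> {0..T}" for u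
  proof -
    have "(y has_real_derivative exp u * (z 0 + integral {0..u} h) + exp u * h u - exp u * g u) (at u within {0..T})"
      unfolding y_def
      by (auto intro!: derivative_eq_intros integral_has_real_derivative[OF hc u]
          integral_has_real_derivative[OF egc u])
    moreover have "exp u * (z 0 + integral {0..u} h) + exp u * h u - exp u * g u = 0"
      using eq[OF u] unfolding h_def by (simp add: algebra_simps)
    ultimately show ?thesis by simp
  qed
  then obtain C where "\<And>u. u \<in> {0..T} \<Longrightarrow> y u = C"
    using has_field_derivative_zero_constant[of "{0..T}" y] by (auto simp: convex_real_interval)
  then have "y T = y 0" using T by simp
  then have "z 0 + integral {0..T} h = exp (- T) * (z 0 + integral {0..T} (\<lambda>s. exp s * g s))"
    by (simp add: y_def exp_minus field_simps)
  also have "\<dots> = exp (- T) * z 0 + integral {0..T} (\<lambda>s. exp (s - T) * g s)"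
    using integral_mult[OF integrable_continuous_interval[OF egc], of "exp (- T)"]
    by (simp add: distrib_left exp_diff exp_minus field_simps)
  finally show ?thesis using eq[of T] T by (simp add: h_def[abs_def])
qed

lemma integral_exp_diff:
  fixes t :: real
  assumes "t \<ge> 0"
  shows "integral {0..t} (\<lambda>s. exp (s - t)) = 1 - exp (- t)"
proof -
  have "((\<lambda>s. exp (s - t)) has_integral (exp (t - t) - exp (0 - t))) {0..t}"
    using assms by (intro fundamental_theorem_of_calculus[where f = "\<lambda>s. exp (s - t)"])
      (auto simp: has_real_derivative_iff_has_vector_derivative[symmetric] intro: has_real_derivative_exp_diff)
  then show ?thesis by (simp add: integral_unique)
qed

lemma integral_exp_diff_mult_integral:
  fixes \<phi> :: "real \<Rightarrow> real"
  assumes t: "t \<ge> 0" and \<phi>: "continuous_on {0..t} \<phi>"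
  shows "integral {0..t} (\<lambda>s. exp (s - t) * integral {0..s} \<phi>) = integral {0..t} (\<lambda>s. (1 - exp (s - t)) * \<phi> s)"
proof -
  have e\<phi>: "continuous_on {0..t} (\<lambda>s. exp (s - t) * \<phi> s)" using \<phi> by (intro continuous_intros)
  define P where "P u = exp (u - t) * integral {0..u} \<phi> - integral {0..u} (\<lambda>s. exp (s - t) * \<phi> s)" for u
  have "((\<lambda>s. exp (s - t) * integral {0..s} \<phi>) has_integral (P t - P 0)) {0..t}"
  proof (rule fundamental_theorem_of_calculus[OF t])
    fix u assume u: "u \<in> {0..t}"
    have "(P has_real_derivative exp (u - t) * integral {0..u} \<phi> + \<phi> u * exp (u - t) - exp (u - t) * \<phi> u)
        (at u within {0..t})"
      unfolding P_def
      by (rule DERIV_diff[OF DERIV_mult[OF has_real_derivative_exp_diff integral_has_real_derivative[OF \<phi> u]]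
          integral_has_real_derivative[OF e\<phi> u]])
    then show "(P has_vector_derivative exp (u - t) * integral {0..u} \<phi>) (at u within {0..t})"
      by (simp add: has_real_derivative_iff_has_vector_derivative)
  qed
  then have "integral {0..t} (\<lambda>s. exp (s - t) * integral {0..s} \<phi>)
      = integral {0..t} \<phi> - integral {0..t} (\<lambda>s. exp (s - t) * \<phi> s)"
    by (simp add: integral_unique P_def)
  also have "\<dots> = integral {0..t} (\<lambda>s. (1 - exp (s - t)) * \<phi> s)"
    using integrable_continuous_interval[OF \<phi>] integrable_continuous_interval[OF e\<phi>]
    by (simp add: integral_diff[symmetric] algebra_simps)
  finally show ?thesis .
qed

lemma ou_variation_of_constants:
  fixes z b h :: "real \<Rightarrow> real"
  assumes t: "t \<ge> 0" and z: "continuous_on {0..t} z" and b: "continuous_on {0..t} b"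
    and h: "continuous_on {0..t} h" and b0: "b 0 = 0"
    and eq: "\<And>u. u \<in> {0..t} \<Longrightarrow> z u = z 0 + integral {0..u} (\<lambda>s. - z s + h s) + lam * (b u - b 0)"
  shows "z t = exp (- t) * z 0 + lam * b t + integral {0..t} (\<lambda>s. exp (s - t) * (h s - lam * b s))"
proof -
  have "z t - lam * b t = exp (- t) * (z 0 - lam * b 0)
      + integral {0..t} (\<lambda>s. exp (s - t) * (h s - lam * b s))"
  proof (rule linear_ode_exp_solution[OF t, where z = "\<lambda>u. z u - lam * b u"])
    fix u assume u: "u \<in> {0..t}"
    have "(\<lambda>s. - (z s - lam * b s) + (h s - lam * b s)) = (\<lambda>s. - z s + h s)" by auto
    then show "z u - lam * b u = z 0 - lam * b 0 + integral {0..u} (\<lambda>s. - (z s - lam * b s) + (h s - lam * b s))"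
      using eq[OF u] b0 by simp
  qed (use z b h in \<open>auto intro!: continuous_intros\<close>)
  then show ?thesis using b0 by simp
qed

text \<open>\<open>lam\<^sup>2 * \<sigma>\<^sup>2 * gain lam \<sigma> r\<close> is the conditional variance of G given the observed path
  \<open>G * s + lam * B s\<close>, \<open>s \<le> r\<close>; this is where the drift of Y comes from (Y is the innovation
  representation of X).\<close>

definition gain :: "real \<Rightarrow> real \<Rightarrow> real \<Rightarrow> real" where
  "gain lam \<sigma> r = 1 / (lam\<^sup>2 + \<sigma>\<^sup>2 * r)"

text \<open>The kernels q in the solution formula
  \<open>exp (- t) * Z 0 + (1 - exp (- t)) * C + lam * B t + \<integral>\<^sub>0\<^sup>t q t w * B w dw\<close> for X and Y.\<close>

definition drift_kernel_X :: "real \<Rightarrow> real \<Rightarrow> real \<Rightarrow> real" where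
  "drift_kernel_X lam t w = - lam * exp (w - t)"

definition drift_kernel_Y :: "real \<Rightarrow> real \<Rightarrow> real \<Rightarrow> real \<Rightarrow> real" where
  "drift_kernel_Y lam \<sigma> t w = exp (w - t) * (lam * \<sigma>\<^sup>2 * gain lam \<sigma> w - lam)
     + lam * \<sigma>\<^sup>2 * ((1 - exp (w - t)) * (\<sigma>\<^sup>2 * (gain lam \<sigma> w)\<^sup>2))"

lemma gain_denominator_pos: "lam \<noteq> 0 \<Longrightarrow> r \<ge> 0 \<Longrightarrow> lam\<^sup>2 + \<sigma>\<^sup>2 * r > (0::real)"
  by (simp add: add_pos_nonneg)

lemma has_real_derivative_gain:
  assumes "lam \<noteq> 0" "r \<ge> 0"
  shows "(gain lam \<sigma> has_real_derivative - \<sigma>\<^sup>2 * (gain lam \<sigma> r)\<^sup>2) (at r within S)"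
proof -
  have "lam\<^sup>2 + \<sigma>\<^sup>2 * r \<noteq> 0" using gain_denominator_pos[OF assms, of \<sigma>] by simp
  then show ?thesis
    unfolding gain_def[abs_def]
    by (auto intro!: derivative_eq_intros simp: power2_eq_square field_simps)
qed

lemma continuous_on_gain: "lam \<noteq> 0 \<Longrightarrow> continuous_on {0..t} (gain lam \<sigma>)"
  unfolding gain_def by (intro continuous_intros) (auto dest: gain_denominator_pos[of lam _ \<sigma>])

lemma ou_path_constant_forcing:
  fixes z b :: "real \<Rightarrow> real"
  assumes t: "t \<ge> 0" and z: "continuous_on {0..t} z" and b: "continuous_on {0..t} b" and b0: "b 0 = 0"
    and eq: "\<And>u. u \<in> {0..t} \<Longrightarrow> z u = z 0 + integral {0..u} (\<lambda>s. - z s + g) + lam * (b u - b 0)"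
  shows "z t = exp (- t) * z 0 + (1 - exp (- t)) * g
              + (lam * b t + integral {0..t} (\<lambda>w. drift_kernel_X lam t w * b w))"
proof -
  have "z t = exp (- t) * z 0 + lam * b t + integral {0..t} (\<lambda>s. exp (s - t) * (g - lam * b s))"
    using ou_variation_of_constants[OF t z b _ b0 eq] by simp
  also have "integral {0..t} (\<lambda>s. exp (s - t) * (g - lam * b s))
      = integral {0..t} (\<lambda>s. g * exp (s - t) + drift_kernel_X lam t s * b s)"
    by (intro integral_cong) (simp add: drift_kernel_X_def algebra_simps)
  also have "\<dots> = g * (1 - exp (- t)) + integral {0..t} (\<lambda>s. drift_kernel_X lam t s * b s)"
    using b unfolding drift_kernel_X_def
    by (subst integral_add) (auto simp: integral_exp_diff[OF t] intro!: integrable_continuous_interval continuous_intros)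
  finally show ?thesis by (simp add: algebra_simps)
qed

lemma integral_gain_forcing:
  fixes b :: "real \<Rightarrow> real"
  assumes lam: "lam \<noteq> 0" and t: "t \<ge> 0" and b: "continuous_on {0..t} b"
  shows "integral {0..t} (\<lambda>s. exp (s - t) * (J + lam * \<sigma>\<^sup>2 * (gain lam \<sigma> s * b s
            + integral {0..s} (\<lambda>r. \<sigma>\<^sup>2 * (gain lam \<sigma> r)\<^sup>2 * b r)) - lam * b s))
       = (1 - exp (- t)) * J + integral {0..t} (\<lambda>w. drift_kernel_Y lam \<sigma> t w * b w)"
proof -
  let ?g = "gain lam \<sigma>"
  define \<phi> where "\<phi> r = \<sigma>\<^sup>2 * (?g r)\<^sup>2 * b r" for r
  let ?A = "integral {0..t} (\<lambda>s. exp (s - t) * (lam * \<sigma>\<^sup>2 * ?g s - lam) * b s)"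
  have g: "continuous_on {0..t} ?g" by (rule continuous_on_gain[OF lam])
  have \<phi>: "continuous_on {0..t} \<phi>" unfolding \<phi>_def using g b by (intro continuous_intros)
  have \<Phi>: "continuous_on {0..t} (\<lambda>s. integral {0..s} \<phi>)"
    by (rule indefinite_integral_continuous_1[OF integrable_continuous_interval[OF \<phi>]])
  have i1: "(\<lambda>s. J * exp (s - t)) integrable_on {0..t}"
    by (intro integrable_continuous_interval continuous_intros)
  have i2: "(\<lambda>s. exp (s - t) * (lam * \<sigma>\<^sup>2 * ?g s - lam) * b s) integrable_on {0..t}"
    using g b by (intro integrable_continuous_interval continuous_intros)
  have i3: "(\<lambda>s. lam * \<sigma>\<^sup>2 * (exp (s - t) * integral {0..s} \<phi>)) integrable_on {0..t}"
    using \<Phi> by (intro integrable_continuous_interval continuous_intros)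
  have i4: "(\<lambda>s. lam * \<sigma>\<^sup>2 * ((1 - exp (s - t)) * \<phi> s)) integrable_on {0..t}"
    using \<phi> by (intro integrable_continuous_interval continuous_intros)
  have "integral {0..t} (\<lambda>s. exp (s - t) * (J + lam * \<sigma>\<^sup>2 * (?g s * b s + integral {0..s} \<phi>) - lam * b s))
      = integral {0..t} (\<lambda>s. J * exp (s - t) + exp (s - t) * (lam * \<sigma>\<^sup>2 * ?g s - lam) * b s
          + lam * \<sigma>\<^sup>2 * (exp (s - t) * integral {0..s} \<phi>))"
    by (intro integral_cong) (simp add: algebra_simps)
  also have "\<dots> = (1 - exp (- t)) * J + ?A + lam * \<sigma>\<^sup>2 * integral {0..t} (\<lambda>s. exp (s - t) * integral {0..s} \<phi>)"
    by (simp add: integral_add[OF integrable_add[OF i1 i2] i3] integral_add[OF i1 i2] integral_exp_diff[OF t])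
  also have "integral {0..t} (\<lambda>s. exp (s - t) * integral {0..s} \<phi>) = integral {0..t} (\<lambda>s. (1 - exp (s - t)) * \<phi> s)"
    by (rule integral_exp_diff_mult_integral[OF t \<phi>])
  finally have split: "integral {0..t} (\<lambda>s. exp (s - t) * (J + lam * \<sigma>\<^sup>2 * (?g s * b s + integral {0..s} \<phi>) - lam * b s))
      = (1 - exp (- t)) * J + ?A + lam * \<sigma>\<^sup>2 * integral {0..t} (\<lambda>s. (1 - exp (s - t)) * \<phi> s)" .
  have "?A + lam * \<sigma>\<^sup>2 * integral {0..t} (\<lambda>s. (1 - exp (s - t)) * \<phi> s)
      = integral {0..t} (\<lambda>s. exp (s - t) * (lam * \<sigma>\<^sup>2 * ?g s - lam) * b s
          + lam * \<sigma>\<^sup>2 * ((1 - exp (s - t)) * \<phi> s))"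
    by (simp add: integral_add[OF i2 i4])
  also have "\<dots> = integral {0..t} (\<lambda>w. drift_kernel_Y lam \<sigma> t w * b w)"
    by (intro integral_cong) (simp add: drift_kernel_Y_def \<phi>_def algebra_simps)
  finally show ?thesis
    using split unfolding \<phi>_def[abs_def] by linarith
qed

lemma ou_path_gain_forcing:
  fixes z b :: "real \<Rightarrow> real"
  assumes lam: "lam \<noteq> 0" and t: "t \<ge> 0" and z: "continuous_on {0..t} z" and b: "continuous_on {0..t} b"
    and b0: "b 0 = 0"
    and eq: "\<And>u. u \<in> {0..t} \<Longrightarrow> z u = z 0 + integral {0..u} (\<lambda>s. - z s + J
      + lam * \<sigma>\<^sup>2 * (gain lam \<sigma> s * b s + integral {0..s} (\<lambda>r. \<sigma>\<^sup>2 * (gain lam \<sigma> r)\<^sup>2 * b r)))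
      + lam * (b u - b 0)"
  shows "z t = exp (- t) * z 0 + (1 - exp (- t)) * J
              + (lam * b t + integral {0..t} (\<lambda>w. drift_kernel_Y lam \<sigma> t w * b w))"
proof -
  define h where "h s = J + lam * \<sigma>\<^sup>2 * (gain lam \<sigma> s * b s
      + integral {0..s} (\<lambda>r. \<sigma>\<^sup>2 * (gain lam \<sigma> r)\<^sup>2 * b r))" for s
  have "continuous_on {0..t} (\<lambda>r. \<sigma>\<^sup>2 * (gain lam \<sigma> r)\<^sup>2 * b r)"
    using continuous_on_gain[OF lam] b by (intro continuous_intros)
  then have h: "continuous_on {0..t} h"
    unfolding h_def using continuous_on_gain[OF lam] b
    by (intro continuous_intros indefinite_integral_continuous_1 integrable_continuous_interval)
  have "integral {0..u} (\<lambda>s. - z s + J + lam * \<sigma>\<^sup>2 * (gain lam \<sigma> s * b s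
      + integral {0..s} (\<lambda>r. \<sigma>\<^sup>2 * (gain lam \<sigma> r)\<^sup>2 * b r))) = integral {0..u} (\<lambda>s. - z s + h s)" for u
    by (intro integral_cong) (simp add: h_def)
  with eq have "z u = z 0 + integral {0..u} (\<lambda>s. - z s + h s) + lam * (b u - b 0)" if "u \<in> {0..t}" for u
    using that by metis
  then have "z t = exp (- t) * z 0 + lam * b t + integral {0..t} (\<lambda>s. exp (s - t) * (h s - lam * b s))"
    by (rule ou_variation_of_constants[OF t z b h b0])
  also have "integral {0..t} (\<lambda>s. exp (s - t) * (h s - lam * b s))
      = (1 - exp (- t)) * J + integral {0..t} (\<lambda>w. drift_kernel_Y lam \<sigma> t w * b w)"
    unfolding h_def by (rule integral_gain_forcing[OF lam t b])
  finally show ?thesis by simp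
qed

lemma wiener_kernel_drift_X:
  assumes "0 \<le> w" "w \<le> t"
  shows "wiener_kernel lam (drift_kernel_X lam) t w = lam * exp (w - t)"
proof -
  have "(drift_kernel_X lam t has_integral (- lam * exp (t - t) - (- lam * exp (w - t)))) {w..t}"
    using assms unfolding drift_kernel_X_def
    by (intro fundamental_theorem_of_calculus[where f = "\<lambda>u. - lam * exp (u - t)"])
      (auto simp: has_real_derivative_iff_has_vector_derivative[symmetric]
        intro!: derivative_eq_intros)
  then show ?thesis by (simp add: wiener_kernel_def integral_unique)
qed

lemma wiener_kernel_drift_Y:
  assumes lam: "lam \<noteq> 0" and w: "0 \<le> w" "w \<le> t"
  shows "wiener_kernel lam (drift_kernel_Y lam \<sigma>) t w
       = lam * exp (w - t) + lam * \<sigma>\<^sup>2 * gain lam \<sigma> w * (1 - exp (w - t))"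
proof -
  define P where "P u = - lam * exp (u - t) - lam * \<sigma>\<^sup>2 * ((1 - exp (u - t)) * gain lam \<sigma> u)" for u
  have "(drift_kernel_Y lam \<sigma> t has_integral (P t - P w)) {w..t}"
  proof (rule fundamental_theorem_of_calculus)
    fix u assume "u \<in> {w..t}"
    then have "u \<ge> 0" using w by simp
    then have "(P has_real_derivative drift_kernel_Y lam \<sigma> t u) (at u within {w..t})"
      unfolding P_def drift_kernel_Y_def
      by (auto intro!: derivative_eq_intros has_real_derivative_gain[OF lam] simp: algebra_simps)
    then show "(P has_vector_derivative drift_kernel_Y lam \<sigma> t u) (at u within {w..t})"
      by (simp add: has_real_derivative_iff_has_vector_derivative)
  qed (use w in simp)
  then show ?thesis
    by (simp add: wiener_kernel_def P_def integral_unique algebra_simps)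
qed

lemma integral_gain_kernel_product:
  fixes lam \<sigma> s t :: real
  assumes lam: "lam \<noteq> 0" and s: "s \<ge> 0" and t: "t \<ge> 0"
  defines "K r w \<equiv> lam * exp (w - r) + lam * \<sigma>\<^sup>2 * gain lam \<sigma> w * (1 - exp (w - r))"
  shows "integral {0..min s t} (\<lambda>w. K s w * K t w)
       = integral {0..min s t} (\<lambda>w. lam * exp (w - s) * (lam * exp (w - t))) + \<sigma>\<^sup>2 * (1 - exp (- s)) * (1 - exp (- t))"
proof -
  define m where "m = min s t"
  have m: "m \<ge> 0" using s t by (simp add: m_def)
  let ?g = "gain lam \<sigma>"
  have g: "continuous_on {0..m} ?g" by (rule continuous_on_gain[OF lam])
  define E where "E w = lam * exp (w - s) * (lam * exp (w - t))" for w
  define P where "P w = - lam\<^sup>2 * \<sigma>\<^sup>2 * (?g w * ((1 - exp (w - s)) * (1 - exp (w - t))))" for w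
  have "((\<lambda>w. K s w * K t w - E w) has_integral (P m - P 0)) {0..m}"
  proof (rule fundamental_theorem_of_calculus[OF m])
    fix u assume "u \<in> {0..m}"
    then have "(P has_real_derivative K s u * K t u - E u) (at u within {0..m})"
      unfolding P_def K_def E_def
      by (auto intro!: derivative_eq_intros has_real_derivative_gain[OF lam] simp: algebra_simps power2_eq_square)
    then show "(P has_vector_derivative K s u * K t u - E u) (at u within {0..m})"
      by (simp add: has_real_derivative_iff_has_vector_derivative)
  qed
  then have "integral {0..m} (\<lambda>w. K s w * K t w - E w) = P m - P 0"
    by (rule integral_unique)
  moreover have "(\<lambda>w. K s w * K t w) integrable_on {0..m}" "E integrable_on {0..m}"
    unfolding K_def E_def[abs_def] using g by (auto intro!: integrable_continuous_interval continuous_intros)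
  moreover have "P m = 0" unfolding P_def m_def by (cases "s \<le> t") auto
  moreover have "P 0 = - \<sigma>\<^sup>2 * (1 - exp (- s)) * (1 - exp (- t))"
    using lam by (simp add: P_def gain_def field_simps)
  ultimately have "integral {0..m} (\<lambda>w. K s w * K t w) - integral {0..m} E = \<sigma>\<^sup>2 * (1 - exp (- s)) * (1 - exp (- t))"
    by (simp add: integral_diff)
  then show ?thesis
    unfolding m_def E_def[abs_def] by linarith
qed

lemma wiener_variance_cong:
  assumes "\<And>t w. t \<in> F \<Longrightarrow> 0 \<le> w \<Longrightarrow> w \<le> t \<Longrightarrow> K t w = K' t w"
  shows "wiener_variance K F c = wiener_variance K' F c"
  unfolding wiener_variance_def
proof (intro sum.cong refl)
  fix s t assume "s \<in> F" "t \<in> F"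
  then have "integral {0..min s t} (\<lambda>w. K s w * K t w) = integral {0..min s t} (\<lambda>w. K' s w * K' t w)"
    using assms by (intro integral_cong) auto
  then show "c s * c t * integral {0..min s t} (\<lambda>w. K s w * K t w)
      = c s * c t * integral {0..min s t} (\<lambda>w. K' s w * K' t w)" by simp
qed

lemma wiener_variance_drift_X:
  "wiener_variance (wiener_kernel lam (drift_kernel_X lam)) F c = wiener_variance (\<lambda>t w. lam * exp (w - t)) F c"
  by (rule wiener_variance_cong) (simp add: wiener_kernel_drift_X)

lemma wiener_variance_drift_Y:
  assumes lam: "lam \<noteq> 0" and F: "F \<subseteq> {0..}"
  shows "wiener_variance (wiener_kernel lam (drift_kernel_Y lam \<sigma>)) F c
       = wiener_variance (\<lambda>t w. lam * exp (w - t)) F c + \<sigma>\<^sup>2 * (\<Sum>t\<in>F. c t * (1 - exp (- t)))\<^sup>2"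
proof -
  let ?K = "\<lambda>r w. lam * exp (w - r) + lam * \<sigma>\<^sup>2 * gain lam \<sigma> w * (1 - exp (w - r))"
  have "wiener_variance (wiener_kernel lam (drift_kernel_Y lam \<sigma>)) F c = wiener_variance ?K F c"
    by (rule wiener_variance_cong) (simp add: wiener_kernel_drift_Y[OF lam])
  also have "\<dots> = (\<Sum>s\<in>F. \<Sum>t\<in>F. c s * c t * integral {0..min s t} (\<lambda>w. lam * exp (w - s) * (lam * exp (w - t)))
      + \<sigma>\<^sup>2 * ((c s * (1 - exp (- s))) * (c t * (1 - exp (- t)))))"
    unfolding wiener_variance_def
  proof (intro sum.cong refl)
    fix s t assume "s \<in> F" "t \<in> F"
    with F have "integral {0..min s t} (\<lambda>w. ?K s w * ?K t w)
        = integral {0..min s t} (\<lambda>w. lam * exp (w - s) * (lam * exp (w - t))) + \<sigma>\<^sup>2 * (1 - exp (- s)) * (1 - exp (- t))"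
      by (intro integral_gain_kernel_product[OF lam]) auto
    then show "c s * c t * integral {0..min s t} (\<lambda>w. ?K s w * ?K t w)
        = c s * c t * integral {0..min s t} (\<lambda>w. lam * exp (w - s) * (lam * exp (w - t)))
          + \<sigma>\<^sup>2 * ((c s * (1 - exp (- s))) * (c t * (1 - exp (- t))))"
      by (simp only:) (simp add: algebra_simps)
  qed
  also have "\<dots> = wiener_variance (\<lambda>t w. lam * exp (w - t)) F c + \<sigma>\<^sup>2 * (\<Sum>t\<in>F. c t * (1 - exp (- t)))\<^sup>2"
  proof -
    have "(\<Sum>t\<in>F. c t * (1 - exp (- t)))\<^sup>2
        = (\<Sum>s\<in>F. \<Sum>t\<in>F. (c s * (1 - exp (- s))) * (c t * (1 - exp (- t))))"
      by (simp add: power2_eq_square sum_product)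
    then show ?thesis
      by (simp add: wiener_variance_def sum.distrib sum_distrib_left)
  qed
  finally show ?thesis .
qed

lemma wiener_integral_gain:
  assumes lam: "lam \<noteq> 0" and s: "s \<ge> 0" and W0: "W 0 \<omega> = 0"
  shows "wiener_integral (\<lambda>r. 1 / (lam\<^sup>2 + \<sigma>\<^sup>2 * r)) W s \<omega>
       = gain lam \<sigma> s * W s \<omega> + integral {0..s} (\<lambda>r. \<sigma>\<^sup>2 * (gain lam \<sigma> r)\<^sup>2 * W r \<omega>)"
proof -
  have "deriv (gain lam \<sigma>) r = - \<sigma>\<^sup>2 * (gain lam \<sigma> r)\<^sup>2" if "r \<in> {0..s}" for r
    using that by (intro DERIV_imp_deriv has_real_derivative_gain[OF lam]) auto
  then have "integral {0..s} (\<lambda>r. deriv (gain lam \<sigma>) r * W r \<omega>)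
      = integral {0..s} (\<lambda>r. - (\<sigma>\<^sup>2 * (gain lam \<sigma> r)\<^sup>2 * W r \<omega>))"
    by (intro integral_cong) simp
  moreover have "(\<lambda>r. 1 / (lam\<^sup>2 + \<sigma>\<^sup>2 * r)) = gain lam \<sigma>"
    by (simp add: gain_def[abs_def])
  ultimately show ?thesis
    using W0 by (simp add: wiener_integral_def)
qed

lemma AE_solution_formula_X:
  assumes B: "brownian_motion M B"
    and X_sol: "AE \<omega> in M. continuous_on {0..} (\<lambda>t. X t \<omega>) \<and>
                 (\<forall>t\<ge>0. X t \<omega> = X 0 \<omega> + integral {0..t} (\<lambda>s. - X s \<omega> + G \<omega>) + lam * (B t \<omega> - B 0 \<omega>))"
  shows "AE \<omega> in M. \<forall>t\<ge>0. X t \<omega> = exp (- t) * X 0 \<omega> + (1 - exp (- t)) * G \<omega>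
           + (lam * B t \<omega> + integral {0..t} (\<lambda>w. drift_kernel_X lam t w * B w \<omega>))"
proof -
  have "AE \<omega> in M. B 0 \<omega> = 0" "AE \<omega> in M. continuous_on {0..} (\<lambda>t. B t \<omega>)"
    using B by (auto simp: brownian_motion_def)
  with X_sol show ?thesis
  proof eventually_elim
    case (elim \<omega>)
    show ?case
    proof (intro allI impI)
      fix t :: real assume t: "t \<ge> 0"
      show "X t \<omega> = exp (- t) * X 0 \<omega> + (1 - exp (- t)) * G \<omega>
           + (lam * B t \<omega> + integral {0..t} (\<lambda>w. drift_kernel_X lam t w * B w \<omega>))"
      proof (rule ou_path_constant_forcing[OF t])
        show "continuous_on {0..t} (\<lambda>t. X t \<omega>)" "continuous_on {0..t} (\<lambda>t. B t \<omega>)"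
          using elim by (auto intro: continuous_on_subset)
        show "X u \<omega> = X 0 \<omega> + integral {0..u} (\<lambda>s. - X s \<omega> + G \<omega>) + lam * (B u \<omega> - B 0 \<omega>)"
          if "u \<in> {0..t}" for u
        proof -
          have "0 \<le> u" using that by simp
          with elim(1) show ?thesis by blast
        qed
      qed (use elim in blast)
    qed
  qed
qed

lemma AE_solution_formula_Y:
  assumes lam: "lam \<noteq> 0" and W: "brownian_motion N W"
    and Y_sol: "AE \<omega> in N. continuous_on {0..} (\<lambda>t. Y t \<omega>) \<and>
                 (\<forall>t\<ge>0. Y t \<omega> = Y 0 \<omega> + integral {0..t} (\<lambda>s. - Y s \<omega> + J
                     + lam * \<sigma>\<^sup>2 * wiener_integral (\<lambda>r. 1 / (lam\<^sup>2 + \<sigma>\<^sup>2 * r)) W s \<omega>)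
                   + lam * (W t \<omega> - W 0 \<omega>))"
  shows "AE \<omega> in N. \<forall>t\<ge>0. Y t \<omega> = exp (- t) * Y 0 \<omega> + (1 - exp (- t)) * J
           + (lam * W t \<omega> + integral {0..t} (\<lambda>w. drift_kernel_Y lam \<sigma> t w * W w \<omega>))"
proof -
  have "AE \<omega> in N. W 0 \<omega> = 0" "AE \<omega> in N. continuous_on {0..} (\<lambda>t. W t \<omega>)"
    using W by (auto simp: brownian_motion_def)
  with Y_sol show ?thesis
  proof eventually_elim
    case (elim \<omega>)
    show ?case
    proof (intro allI impI)
      fix t :: real assume t: "t \<ge> 0"
      show "Y t \<omega> = exp (- t) * Y 0 \<omega> + (1 - exp (- t)) * J
           + (lam * W t \<omega> + integral {0..t} (\<lambda>w. drift_kernel_Y lam \<sigma> t w * W w \<omega>))"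
      proof (rule ou_path_gain_forcing[OF lam t])
        show "continuous_on {0..t} (\<lambda>t. Y t \<omega>)" "continuous_on {0..t} (\<lambda>t. W t \<omega>)"
          using elim by (auto intro: continuous_on_subset)
        have forcing: "integral {0..u} (\<lambda>s. - Y s \<omega> + J
              + lam * \<sigma>\<^sup>2 * wiener_integral (\<lambda>r. 1 / (lam\<^sup>2 + \<sigma>\<^sup>2 * r)) W s \<omega>)
            = integral {0..u} (\<lambda>s. - Y s \<omega> + J + lam * \<sigma>\<^sup>2 * (gain lam \<sigma> s * W s \<omega>
              + integral {0..s} (\<lambda>r. \<sigma>\<^sup>2 * (gain lam \<sigma> r)\<^sup>2 * W r \<omega>)))" for u
          using elim(2) by (intro integral_cong) (simp add: wiener_integral_gain[OF lam])
        show "Y u \<omega> = Y 0 \<omega> + integral {0..u} (\<lambda>s. - Y s \<omega> + J + lam * \<sigma>\<^sup>2 * (gain lam \<sigma> s * W s \<omega>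
              + integral {0..s} (\<lambda>r. \<sigma>\<^sup>2 * (gain lam \<sigma> r)\<^sup>2 * W r \<omega>))) + lam * (W u \<omega> - W 0 \<omega>)"
          if "u \<in> {0..t}" for u
        proof -
          have "0 \<le> u" using that by simp
          with elim(1) have "Y u \<omega> = Y 0 \<omega> + integral {0..u} (\<lambda>s. - Y s \<omega> + J
              + lam * \<sigma>\<^sup>2 * wiener_integral (\<lambda>r. 1 / (lam\<^sup>2 + \<sigma>\<^sup>2 * r)) W s \<omega>)
            + lam * (W u \<omega> - W 0 \<omega>)" by blast
          then show ?thesis unfolding forcing .
        qed
      qed (use elim in blast)
    qed
  qed
qed

lemma sum_mult_affine:
  fixes c a b r :: "'a \<Rightarrow> real"
  shows "(\<Sum>t\<in>F. c t * (a t * x + b t * y + r t))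
       = (\<Sum>t\<in>F. c t * a t) * x + (\<Sum>t\<in>F. c t * b t) * y + (\<Sum>t\<in>F. c t * r t)"
proof -
  have "(\<Sum>t\<in>F. c t * (a t * x + b t * y + r t)) = (\<Sum>t\<in>F. (c t * a t) * x + (c t * b t) * y + c t * r t)"
    by (intro sum.cong refl) (simp add: algebra_simps)
  then show ?thesis
    by (simp add: sum.distrib sum_distrib_right)
qed

lemma char_lincomb_solution:
  assumes B: "brownian_motion M B" and F: "finite F" "F \<subseteq> {0..}"
    and q: "\<And>t. t \<in> F \<Longrightarrow> continuous_on {0..t} (q t)"
    and Z: "\<And>t. Z t \<in> borel_measurable M" and C: "C \<in> borel_measurable M"
    and indep: "indep_path_iexp M (\<lambda>\<omega>. (\<Sum>t\<in>F. c t * exp (- t)) * Z 0 \<omega> + (\<Sum>t\<in>F. c t * (1 - exp (- t))) * C \<omega>) B"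
    and rep: "AE \<omega> in M. \<forall>t\<ge>0. Z t \<omega> = exp (- t) * Z 0 \<omega> + (1 - exp (- t)) * C \<omega>
                + (lam * B t \<omega> + integral {0..t} (\<lambda>w. q t w * B w \<omega>))"
  shows "char (distr M borel (\<lambda>\<omega>. \<Sum>t\<in>F. c t * Z t \<omega>)) u
       = char (distr M borel (\<lambda>\<omega>. (\<Sum>t\<in>F. c t * exp (- t)) * Z 0 \<omega> + (\<Sum>t\<in>F. c t * (1 - exp (- t))) * C \<omega>)) u
         * gauss_char 0 (wiener_variance (wiener_kernel lam q) F c) u"
proof -
  note [measurable] = Z C
  have I: "(\<lambda>\<omega>. (\<Sum>t\<in>F. c t * exp (- t)) * Z 0 \<omega> + (\<Sum>t\<in>F. c t * (1 - exp (- t))) * C \<omega>)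
      \<in> borel_measurable M" by measurable
  have S: "(\<lambda>\<omega>. \<Sum>t\<in>F. c t * Z t \<omega>) \<in> borel_measurable M" by measurable
  show ?thesis
  proof (rule char_add_wiener_functional[OF B F q I indep S])
    show "AE \<omega> in M. (\<Sum>t\<in>F. c t * Z t \<omega>) = (\<Sum>t\<in>F. c t * exp (- t)) * Z 0 \<omega>
        + (\<Sum>t\<in>F. c t * (1 - exp (- t))) * C \<omega>
        + (\<Sum>t\<in>F. c t * (lam * B t \<omega> + integral {0..t} (\<lambda>w. q t w * B w \<omega>)))"
      using rep
    proof eventually_elim
      case (elim \<omega>)
      have "Z t \<omega> = exp (- t) * Z 0 \<omega> + (1 - exp (- t)) * C \<omega>
          + (lam * B t \<omega> + integral {0..t} (\<lambda>w. q t w * B w \<omega>))" if "t \<in> F" for t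
      proof -
        have "t \<ge> 0" using F that by auto
        with elim show ?thesis by blast
      qed
      then have "(\<Sum>t\<in>F. c t * Z t \<omega>) = (\<Sum>t\<in>F. c t * (exp (- t) * Z 0 \<omega> + (1 - exp (- t)) * C \<omega>
          + (lam * B t \<omega> + integral {0..t} (\<lambda>w. q t w * B w \<omega>))))"
        by (intro sum.cong refl) (simp only:)
      then show ?case by (simp only: sum_mult_affine)
    qed
  qed
qed

section \<open>Finite-dimensional distributions of X and Y\<close>

lemma indep3_rv_char_lincomb:
  assumes "prob_space M" and indep: "indep3_rv M borel U borel V (Pi\<^sub>M {0..} (\<lambda>_. borel)) (path B)"
    and [measurable]: "U \<in> borel_measurable M" "V \<in> borel_measurable M" "\<And>t. B t \<in> borel_measurable M"
  shows "indep_path_iexp M (\<lambda>\<omega>. a * U \<omega> + b * V \<omega>) B"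
    and "char (distr M borel (\<lambda>\<omega>. a * U \<omega> + b * V \<omega>)) u
         = char (distr M borel U) (u * a) * char (distr M borel V) (u * b)"
proof -
  interpret prob_space M by fact
  have [measurable]: "path B \<in> measurable M (Pi\<^sub>M {0..} (\<lambda>_. borel))" by (rule measurable_path) simp
  have factor: "(CLINT \<omega>|M. iexp (u * (a * U \<omega> + b * V \<omega>) + \<Phi> (path B \<omega>)))
      = (CLINT \<omega>|M. iexp ((u * a) * U \<omega>)) * (CLINT \<omega>|M. iexp ((u * b) * V \<omega>))
        * (CLINT \<omega>|M. iexp (\<Phi> (path B \<omega>)))"
    if [measurable]: "\<Phi> \<in> borel_measurable (Pi\<^sub>M {0..} (\<lambda>_. borel))" for u \<Phi>
    using indep3_rv_integral_iexp[OF \<open>prob_space M\<close> indep, of "\<lambda>x. (u * a) * x" "\<lambda>x. (u * b) * x" \<Phi>]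
    by (simp add: algebra_simps)
  from factor[of "\<lambda>_. 0"] have no_path: "(CLINT \<omega>|M. iexp (u * (a * U \<omega> + b * V \<omega>)))
      = (CLINT \<omega>|M. iexp ((u * a) * U \<omega>)) * (CLINT \<omega>|M. iexp ((u * b) * V \<omega>))" for u
    by (simp add: prob_space)
  show "indep_path_iexp M (\<lambda>\<omega>. a * U \<omega> + b * V \<omega>) B"
    unfolding indep_path_iexp_def
  proof (intro allI impI)
    fix u :: real and \<Phi> :: "(real \<Rightarrow> real) \<Rightarrow> real"
    assume "\<Phi> \<in> borel_measurable (Pi\<^sub>M {0..} (\<lambda>_. borel))"
    then show "(CLINT \<omega>|M. iexp (u * (a * U \<omega> + b * V \<omega>) + \<Phi> (path B \<omega>)))
        = (CLINT \<omega>|M. iexp (u * (a * U \<omega> + b * V \<omega>))) * (CLINT \<omega>|M. iexp (\<Phi> (path B \<omega>)))"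
      using factor[of \<Phi> u] no_path[of u] by simp
  qed
  show "char (distr M borel (\<lambda>\<omega>. a * U \<omega> + b * V \<omega>)) u
      = char (distr M borel U) (u * a) * char (distr M borel V) (u * b)"
  proof -
    have "char (distr M borel (\<lambda>\<omega>. a * U \<omega> + b * V \<omega>)) u = (CLINT \<omega>|M. iexp (u * (a * U \<omega> + b * V \<omega>)))"
      by (simp add: char_distr_eq_integral)
    also have "\<dots> = (CLINT \<omega>|M. iexp ((u * a) * U \<omega>)) * (CLINT \<omega>|M. iexp ((u * b) * V \<omega>))"
      by (rule no_path)
    finally show ?thesis by (simp add: char_distr_eq_integral)
  qed
qed

lemma indep2_rv_char_affine:
  assumes "prob_space M" and indep: "indep2_rv M borel U (Pi\<^sub>M {0..} (\<lambda>_. borel)) (path B)"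
    and [measurable]: "U \<in> borel_measurable M" "\<And>t. B t \<in> borel_measurable M"
  shows "indep_path_iexp M (\<lambda>\<omega>. a * U \<omega> + b) B"
    and "char (distr M borel (\<lambda>\<omega>. a * U \<omega> + b)) u = gauss_char b 0 u * char (distr M borel U) (u * a)"
proof -
  interpret prob_space M by fact
  have [measurable]: "path B \<in> measurable M (Pi\<^sub>M {0..} (\<lambda>_. borel))" by (rule measurable_path) simp
  have shift: "iexp (u * (a * U \<omega> + b) + \<Phi>) = iexp (u * b) * iexp ((u * a) * U \<omega> + \<Phi>)" for u \<omega> \<Phi>
    by (simp add: algebra_simps exp_add[symmetric])
  have "(CLINT \<omega>|M. iexp (u * (a * U \<omega> + b) + \<Phi> (path B \<omega>)))
      = (CLINT \<omega>|M. iexp (u * (a * U \<omega> + b))) * (CLINT \<omega>|M. iexp (\<Phi> (path B \<omega>)))"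
    if [measurable]: "\<Phi> \<in> borel_measurable (Pi\<^sub>M {0..} (\<lambda>_. borel))" for u \<Phi>
    using indep2_rv_integral_iexp[OF \<open>prob_space M\<close> indep, of "\<lambda>x. (u * a) * x" \<Phi>]
      shift[of u _ "\<Phi> (path B _)"] shift[of u _ 0]
    by simp
  then show "indep_path_iexp M (\<lambda>\<omega>. a * U \<omega> + b) B"
    unfolding indep_path_iexp_def by blast
  show "char (distr M borel (\<lambda>\<omega>. a * U \<omega> + b)) u = gauss_char b 0 u * char (distr M borel U) (u * a)"
    using shift[of u _ 0] by (simp add: char_distr_eq_integral gauss_char_def mult_ac)
qed

lemma char_lincomb_X:
  fixes c :: "real \<Rightarrow> real"
  assumes B: "brownian_motion M B" and G: "distributed M lborel G (normal_density J \<sigma>)" and \<sigma>: "\<sigma> > 0"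
    and X: "\<And>t. X t \<in> borel_measurable M"
    and indep: "indep3_rv M borel (X 0) borel G (Pi\<^sub>M {0..} (\<lambda>_. borel)) (path B)"
    and X_sol: "AE \<omega> in M. continuous_on {0..} (\<lambda>t. X t \<omega>) \<and>
                 (\<forall>t\<ge>0. X t \<omega> = X 0 \<omega> + integral {0..t} (\<lambda>s. - X s \<omega> + G \<omega>) + lam * (B t \<omega> - B 0 \<omega>))"
    and X0: "\<And>u. char (distr M borel (X 0)) u = gauss_char m0 v0 u"
    and F: "finite F" "F \<subseteq> {0..}"
  defines "a \<equiv> \<Sum>t\<in>F. c t * exp (- t)" and "b \<equiv> \<Sum>t\<in>F. c t * (1 - exp (- t))"
  shows "char (distr M borel (\<lambda>\<omega>. \<Sum>t\<in>F. c t * X t \<omega>)) u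
       = gauss_char (a * m0 + b * J) (a\<^sup>2 * v0 + b\<^sup>2 * \<sigma>\<^sup>2 + wiener_variance (\<lambda>t w. lam * exp (w - t)) F c) u"
proof -
  have M: "prob_space M" and Bm: "\<And>t. B t \<in> borel_measurable M"
    using B by (simp_all add: brownian_motion_def)
  have Gm: "G \<in> borel_measurable M"
    using G by (simp add: distributed_def)
  have G_char: "char (distr M borel G) u = gauss_char J (\<sigma>\<^sup>2) u" for u
    using G \<sigma> by (simp add: distributed_def distr_lborel_eq_borel char_normal_density)
  note I = indep3_rv_char_lincomb[OF M indep X Gm Bm]
  have q: "continuous_on {0..t} (drift_kernel_X lam t)" for t
    unfolding drift_kernel_X_def by (intro continuous_intros)
  have "char (distr M borel (\<lambda>\<omega>. \<Sum>t\<in>F. c t * X t \<omega>)) u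
      = char (distr M borel (\<lambda>\<omega>. a * X 0 \<omega> + b * G \<omega>)) u
        * gauss_char 0 (wiener_variance (wiener_kernel lam (drift_kernel_X lam)) F c) u"
    unfolding a_def b_def
    by (rule char_lincomb_solution[OF B F q X Gm I(1) AE_solution_formula_X[OF B X_sol]])
  also have "char (distr M borel (\<lambda>\<omega>. a * X 0 \<omega> + b * G \<omega>)) u
      = gauss_char (a * m0) (a\<^sup>2 * v0) u * gauss_char (b * J) (b\<^sup>2 * \<sigma>\<^sup>2) u"
    by (simp add: I(2) X0 G_char gauss_char_scale)
  finally show ?thesis
    by (simp add: gauss_char_mult wiener_variance_drift_X)
qed

lemma char_lincomb_Y:
  fixes c :: "real \<Rightarrow> real"
  assumes lam: "lam \<noteq> 0" and W: "brownian_motion N W"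
    and Y: "\<And>t. Y t \<in> borel_measurable N"
    and indep: "indep2_rv N borel (Y 0) (Pi\<^sub>M {0..} (\<lambda>_. borel)) (path W)"
    and Y_sol: "AE \<omega> in N. continuous_on {0..} (\<lambda>t. Y t \<omega>) \<and>
                 (\<forall>t\<ge>0. Y t \<omega> = Y 0 \<omega> + integral {0..t} (\<lambda>s. - Y s \<omega> + J
                     + lam * \<sigma>\<^sup>2 * wiener_integral (\<lambda>r. 1 / (lam\<^sup>2 + \<sigma>\<^sup>2 * r)) W s \<omega>)
                   + lam * (W t \<omega> - W 0 \<omega>))"
    and Y0: "\<And>u. char (distr N borel (Y 0)) u = gauss_char m0 v0 u"
    and F: "finite F" "F \<subseteq> {0..}"
  defines "a \<equiv> \<Sum>t\<in>F. c t * exp (- t)" and "b \<equiv> \<Sum>t\<in>F. c t * (1 - exp (- t))"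
  shows "char (distr N borel (\<lambda>\<omega>. \<Sum>t\<in>F. c t * Y t \<omega>)) u
       = gauss_char (a * m0 + b * J) (a\<^sup>2 * v0 + b\<^sup>2 * \<sigma>\<^sup>2 + wiener_variance (\<lambda>t w. lam * exp (w - t)) F c) u"
proof -
  have N: "prob_space N" and Wm: "\<And>t. W t \<in> borel_measurable N"
    using W by (simp_all add: brownian_motion_def)
  note I = indep2_rv_char_affine[OF N indep Y Wm]
  have q: "continuous_on {0..t} (drift_kernel_Y lam \<sigma> t)" for t
    unfolding drift_kernel_Y_def using continuous_on_gain[OF lam] by (intro continuous_intros)
  have "char (distr N borel (\<lambda>\<omega>. \<Sum>t\<in>F. c t * Y t \<omega>)) u
      = char (distr N borel (\<lambda>\<omega>. a * Y 0 \<omega> + b * J)) u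
        * gauss_char 0 (wiener_variance (wiener_kernel lam (drift_kernel_Y lam \<sigma>)) F c) u"
    using char_lincomb_solution[OF W F q Y borel_measurable_const I(1)[of a "b * J", unfolded a_def b_def]
        AE_solution_formula_Y[OF lam W Y_sol]]
    by (simp only: a_def b_def mult.assoc)
  also have "char (distr N borel (\<lambda>\<omega>. a * Y 0 \<omega> + b * J)) u
      = gauss_char (b * J) 0 u * gauss_char (a * m0) (a\<^sup>2 * v0) u"
    by (simp add: I(2) Y0 gauss_char_scale)
  finally show ?thesis
    by (simp add: gauss_char_mult wiener_variance_drift_Y[OF lam F(2)] b_def[symmetric] ac_simps)
qed

theorem proposition5p3:
  fixes M :: "'a measure" and N :: "'b measure"
    and X B :: "real \<Rightarrow> 'a \<Rightarrow> real" and G :: "'a \<Rightarrow> real"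
    and Y W :: "real \<Rightarrow> 'b \<Rightarrow> real"
    and lam J sigma :: real
  assumes lam: "lam \<noteq> 0" and sigma: "sigma > 0"
    and M: "prob_space M" and N: "prob_space N"
    and B: "brownian_motion M B"
    and G: "distributed M lborel G (normal_density J sigma)"
    and X_meas: "\<forall>t. X t \<in> borel_measurable M"
    and indep_XGB: "indep3_rv M borel (X 0) borel G (Pi\<^sub>M {0..} (\<lambda>_. borel)) (path B)"
    and X_sol: "AE \<omega> in M. continuous_on {0..} (\<lambda>t. X t \<omega>) \<and>
                 (\<forall>t\<ge>0. X t \<omega> = X 0 \<omega> + integral {0..t} (\<lambda>s. - X s \<omega> + G \<omega>)
                                    + lam * (B t \<omega> - B 0 \<omega>))"
    and W: "brownian_motion N W"
    and Y_meas: "\<forall>t. Y t \<in> borel_measurable N"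
    and indep3: "indep2_rv N borel (Y 0) (Pi\<^sub>M {0..} (\<lambda>_. borel)) (path W)"
    and Y_sol: "AE \<omega> in N. continuous_on {0..} (\<lambda>t. Y t \<omega>) \<and>
                 (\<forall>t\<ge>0. Y t \<omega> = Y 0 \<omega> + integral {0..t} (\<lambda>s. - Y s \<omega> + J
                     + lam * sigma\<^sup>2 * wiener_integral (\<lambda>r. 1 / (lam\<^sup>2 + sigma\<^sup>2 * r)) W s \<omega>)
                   + lam * (W t \<omega> - W 0 \<omega>))"
    and X0_gauss: "real_gaussian M (X 0)"
    and same_init: "distr M lborel (X 0) = distr N lborel (Y 0)"
  shows "gaussian_process M X {0..} \<and> gaussian_process N Y {0..} \<and>
         (\<forall>t\<ge>0. prob_space.expectation M (X t) = prob_space.expectation N (Y t)) \<and>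
         (\<forall>s\<ge>0. \<forall>t\<ge>0.
            prob_space.expectation M (\<lambda>\<omega>. X s \<omega> * X t \<omega>)
              - prob_space.expectation M (X s) * prob_space.expectation M (X t)
          = prob_space.expectation N (\<lambda>\<omega>. Y s \<omega> * Y t \<omega>)
              - prob_space.expectation N (Y s) * prob_space.expectation N (Y t))"
proof -
  have X: "\<And>t. X t \<in> borel_measurable M" and Y: "\<And>t. Y t \<in> borel_measurable N"
    using X_meas Y_meas by auto
  obtain m0 v0 where X0: "\<And>u. char (distr M borel (X 0)) u = gauss_char m0 v0 u"
    using char_real_gaussian[OF X0_gauss] by metis
  have Y0: "\<And>u. char (distr N borel (Y 0)) u = gauss_char m0 v0 u"
    using X0 same_init by (simp add: distr_lborel_eq_borel)
  have "\<exists>m v. (\<forall>u. char (distr M borel (\<lambda>\<omega>. \<Sum>t\<in>F. c t * X t \<omega>)) u = gauss_char m v u) \<and>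
              (\<forall>u. char (distr N borel (\<lambda>\<omega>. \<Sum>t\<in>F. c t * Y t \<omega>)) u = gauss_char m v u)"
    if "finite F" "F \<subseteq> {0..}" for F c
    using char_lincomb_X[OF B G sigma X indep_XGB X_sol X0 that]
      char_lincomb_Y[OF lam W Y indep3 Y_sol Y0 that] by blast
  from gaussian_processes_same_moments[where T = "{0..}", OF M N X Y this] show ?thesis
    unfolding Ball_def atLeast_iff .
qed

end
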